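(* Let $S_{\mathbb 1}\in\mathcal B(\ell^2(V))$ be the adjacency operator of a directed tree $\mathcal T=(V,E)$. Then: (i) $S_{\mathbb 1}$ is a $2$-isometry satisfying the kernel condition iff $\mathcal T$ is graph isomorphic to $\mathbb Z_+$ or to $\mathbb Z$; (ii) if $\mathcal T$ is rooted, $S_{\mathbb 1}$ is a Brownian isometry iff $\mathcal T$ is graph isomorphic to $\mathbb Z_+$; (iii) if $\mathcal T$ is rooted, $S_{\mathbb 1}$ is a quasi-Brownian isometry iff $\mathcal T$ is graph isomorphic to $\mathbb Z_+$ or $\mathcal T$ is a quasi-Brownian directed tree; (iv) if $\mathcal T$ is rootless, $S_{\mathbb 1}$ is a quasi-Brownian isometry iff it is a Brownian isometry, iff $\mathcal T$ is graph isomorphic to $\mathbb Z$ or is a quasi-Brownian directed tree.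
   Context: A directed tree is a connected directed graph without circuits with each vertex having at most one parent; $\mathrm{par}$, $\mathrm{Chi}(u)$ (children) and $\deg u=\#\mathrm{Chi}(u)$ as usual. The adjacency operator is the weighted shift with all weights $1$: $(S_{\mathbb 1}f)(v)=f(\mathrm{par}(v))$ for non-root $v$ and $0$ at the root. $\mathbb Z_+$ and $\mathbb Z$ denote the directed trees with edges $(n,n+1)$. $2$-isometry: $I-2T^*T+T^{*2}T^2=0$. Kernel condition: $T^*T(\ker T^* )\subseteq\ker T^*$. With $\Delta_T=T^*T-I$: a quasi-Brownian isometry is a $2$-isometry with $\Delta_TT=\Delta_T^{1/2}T\Delta_T^{1/2}$; a Brownian isometry is a $2$-isometry with $\Delta_T\Delta_{T^*}\Delta_T=0$. For $l\in\{2,3,\ldots\}$, a quasi-Brownian directed tree of valency $l$ is a directed tree in which some vertex has degree $l$, every vertex has degree $1$ or $l$, every child of a degree-$1$ vertex has degree $1$, and each vertex of degree $l$ has exactly one child of degree $l$ while its other $l-1$ children have degree $1$. *)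

theory Defs
  imports "HOL-Analysis.Analysis"
begin

definition directed_tree :: "'a set \<Rightarrow> ('a \<times> 'a) set \<Rightarrow> bool" where
  "directed_tree V E \<longleftrightarrow>
     V \<noteq> {} \<and> E \<subseteq> V \<times> V \<and>
     (\<forall>u\<in>V. \<forall>v\<in>V. (u, v) \<in> (E \<union> E\<inverse>)\<^sup>*) \<and>
     acyclic E \<and>
     (\<forall>u w v. (u, v) \<in> E \<longrightarrow> (w, v) \<in> E \<longrightarrow> u = w)"

definition is_root :: "'a set \<Rightarrow> ('a \<times> 'a) set \<Rightarrow> 'a \<Rightarrow> bool" where
  "is_root V E r \<longleftrightarrow> r \<in> V \<and> (\<nexists>u. (u, r) \<in> E)"

definition rooted :: "'a set \<Rightarrow> ('a \<times> 'a) set \<Rightarrow> bool" where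
  "rooted V E \<longleftrightarrow> (\<exists>r. is_root V E r)"

definition par :: "('a \<times> 'a) set \<Rightarrow> 'a \<Rightarrow> 'a" where
  "par E v = (THE u. (u, v) \<in> E)"

definition Chi :: "('a \<times> 'a) set \<Rightarrow> 'a \<Rightarrow> 'a set" where
  "Chi E u = {v. (u, v) \<in> E}"

definition deg :: "('a \<times> 'a) set \<Rightarrow> 'a \<Rightarrow> nat" where
  "deg E u = card (Chi E u)"

definition iso_Zplus :: "'a set \<Rightarrow> ('a \<times> 'a) set \<Rightarrow> bool" where
  "iso_Zplus V E \<longleftrightarrow> (\<exists>\<phi>. bij_betw \<phi> V (UNIV :: nat set) \<and>
      (\<forall>u\<in>V. \<forall>v\<in>V. (u, v) \<in> E \<longleftrightarrow> \<phi> v = \<phi> u + 1))"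

definition iso_Z :: "'a set \<Rightarrow> ('a \<times> 'a) set \<Rightarrow> bool" where
  "iso_Z V E \<longleftrightarrow> (\<exists>\<phi>. bij_betw \<phi> V (UNIV :: int set) \<and>
      (\<forall>u\<in>V. \<forall>v\<in>V. (u, v) \<in> E \<longleftrightarrow> \<phi> v = \<phi> u + 1))"

definition quasi_brownian_tree_val :: "'a set \<Rightarrow> ('a \<times> 'a) set \<Rightarrow> nat \<Rightarrow> bool" where
  "quasi_brownian_tree_val V E l \<longleftrightarrow>
     (\<exists>v\<in>V. deg E v = l) \<and>
     (\<forall>v\<in>V. deg E v = 1 \<or> deg E v = l) \<and>
     (\<forall>v\<in>V. deg E v = 1 \<longrightarrow> (\<forall>w\<in>Chi E v. deg E w = 1)) \<and>
     (\<forall>v\<in>V. deg E v = l \<longrightarrow>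
        card {w \<in> Chi E v. deg E w = l} = 1 \<and> card {w \<in> Chi E v. deg E w = 1} = l - 1)"

definition quasi_brownian_tree :: "'a set \<Rightarrow> ('a \<times> 'a) set \<Rightarrow> bool" where
  "quasi_brownian_tree V E \<longleftrightarrow> (\<exists>l\<ge>2. quasi_brownian_tree_val V E l)"

text \<open>Elements of ell^2(V) are represented as functions vanishing outside V;
operators are maps on such functions, considered only on ell^2(V).\<close>

definition ell2 :: "'a set \<Rightarrow> ('a \<Rightarrow> complex) set" where
  "ell2 V = {f. (\<forall>x. x \<notin> V \<longrightarrow> f x = 0) \<and> (\<lambda>x. (cmod (f x))\<^sup>2) summable_on V}"

definition ell2_inner :: "'a set \<Rightarrow> ('a \<Rightarrow> complex) \<Rightarrow> ('a \<Rightarrow> complex) \<Rightarrow> complex" where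
  "ell2_inner V f g = (\<Sum>\<^sub>\<infinity>x\<in>V. cnj (f x) * g x)"

definition ell2_norm :: "'a set \<Rightarrow> ('a \<Rightarrow> complex) \<Rightarrow> real" where
  "ell2_norm V f = sqrt (\<Sum>\<^sub>\<infinity>x\<in>V. (cmod (f x))\<^sup>2)"

type_synonym 'a op = "('a \<Rightarrow> complex) \<Rightarrow> ('a \<Rightarrow> complex)"

definition bounded_op :: "'a set \<Rightarrow> 'a op \<Rightarrow> bool" where
  "bounded_op V T \<longleftrightarrow>
     (\<forall>f\<in>ell2 V. T f \<in> ell2 V) \<and>
     (\<forall>f\<in>ell2 V. \<forall>g\<in>ell2 V. \<forall>a b. T (\<lambda>x. a * f x + b * g x) = (\<lambda>x. a * T f x + b * T g x)) \<and>
     (\<exists>C. \<forall>f\<in>ell2 V. ell2_norm V (T f) \<le> C * ell2_norm V f)"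

text \<open>The Hilbert space adjoint (made unique by setting it 0 outside ell^2(V)).\<close>

definition adjoint :: "'a set \<Rightarrow> 'a op \<Rightarrow> 'a op" where
  "adjoint V T = (THE A. (\<forall>g\<in>ell2 V. A g \<in> ell2 V) \<and>
      (\<forall>f\<in>ell2 V. \<forall>g\<in>ell2 V. ell2_inner V (T f) g = ell2_inner V f (A g)) \<and>
      (\<forall>g. g \<notin> ell2 V \<longrightarrow> A g = (\<lambda>_. 0)))"

definition positive_op :: "'a set \<Rightarrow> 'a op \<Rightarrow> bool" where
  "positive_op V R \<longleftrightarrow> (\<forall>f\<in>ell2 V. Im (ell2_inner V (R f) f) = 0 \<and> Re (ell2_inner V (R f) f) \<ge> 0)"

definition sqrt_op :: "'a set \<Rightarrow> 'a op \<Rightarrow> 'a op" where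
  "sqrt_op V A = (THE R. bounded_op V R \<and> positive_op V R \<and>
      (\<forall>f\<in>ell2 V. R (R f) = A f) \<and> (\<forall>f. f \<notin> ell2 V \<longrightarrow> R f = (\<lambda>_. 0)))"

definition Delta :: "'a set \<Rightarrow> 'a op \<Rightarrow> 'a op" where
  "Delta V T = (\<lambda>f x. adjoint V T (T f) x - f x)"

definition two_isometry :: "'a set \<Rightarrow> 'a op \<Rightarrow> bool" where
  "two_isometry V T \<longleftrightarrow> (\<forall>f\<in>ell2 V.
     (\<lambda>x. f x - 2 * adjoint V T (T f) x + adjoint V T (adjoint V T (T (T f))) x) = (\<lambda>_. 0))"

definition kernel_condition :: "'a set \<Rightarrow> 'a op \<Rightarrow> bool" where
  "kernel_condition V T \<longleftrightarrow> (\<forall>f\<in>ell2 V. adjoint V T f = (\<lambda>_. 0) \<longrightarrow>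
     adjoint V T (adjoint V T (T f)) = (\<lambda>_. 0))"

definition quasi_brownian_isometry :: "'a set \<Rightarrow> 'a op \<Rightarrow> bool" where
  "quasi_brownian_isometry V T \<longleftrightarrow> two_isometry V T \<and>
     (\<forall>f\<in>ell2 V. Delta V T (T f) = sqrt_op V (Delta V T) (T (sqrt_op V (Delta V T) f)))"

definition brownian_isometry :: "'a set \<Rightarrow> 'a op \<Rightarrow> bool" where
  "brownian_isometry V T \<longleftrightarrow> two_isometry V T \<and>
     (\<forall>f\<in>ell2 V. Delta V T (Delta V (adjoint V T) (Delta V T f)) = (\<lambda>_. 0))"

definition adjacency_op :: "'a set \<Rightarrow> ('a \<times> 'a) set \<Rightarrow> 'a op" where
  "adjacency_op V E f = (\<lambda>v. if v \<in> V \<and> (\<exists>u. (u, v) \<in> E) then f (par E v) else 0)"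

end

theory Submission
  imports Defs
begin

text \<open>The adjacency operator sends the basis vector of \<open>u\<close> to the sum of the basis vectors of
  the children of \<open>u\<close>. Hence \<open>S\<^sup>*S\<close> and \<open>S\<^sup>*\<^sup>2S\<^sup>2\<close> are diagonal, with entries \<open>deg u\<close> and the
  sum of the degrees of the children of \<open>u\<close>; so \<open>\<Delta>\<^sub>S\<close> is multiplication by \<open>deg - 1\<close> and its
  positive square root multiplication by \<open>\<surd>(deg - 1)\<close>. Every operator condition thus becomes a
  condition on degrees: \<open>S\<close> is a \<open>2\<close>-isometry iff \<open>1 + (sum of the degrees of the children) =
  2 deg u\<close> at every vertex; the kernel condition forces siblings to have equal degrees;
  quasi-Brownian adds that every child has degree \<open>1\<close> or the degree of its parent; Brownian
  adds that roots have degree \<open>1\<close> and of two siblings at least one has degree \<open>1\<close>.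
  Combinatorially, if all degrees are \<open>1\<close> the tree is a path, i.e. \<open>\<int>\<^sub>+\<close> or \<open>\<int>\<close>. Otherwise
  some vertex has degree \<open>l \<ge> 2\<close>; every vertex shares an ancestor with it, which forces all
  degrees into \<open>{1, l}\<close>, and the degree balance at a vertex of degree \<open>l\<close> leaves room for
  exactly one child of degree \<open>l\<close>.\<close>

section \<open>Directed trees\<close>

lemma bij_betw_obtain_preimage:
  assumes "bij_betw f A B" "y \<in> B"
  obtains x where "x \<in> A" "f x = y"
  using assms unfolding bij_betw_def by blast

locale dtree =
  fixes V :: "'a set" and E :: "('a \<times> 'a) set"
  assumes tree: "directed_tree V E"
begin

lemma edges_subset: "E \<subseteq> V \<times> V"
  using tree unfolding directed_tree_def by auto

lemma edge_in_V: "(u, v) \<in> E \<Longrightarrow> u \<in> V \<and> v \<in> V"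
  using edges_subset by blast

lemma parent_unique: "(u, v) \<in> E \<Longrightarrow> (w, v) \<in> E \<Longrightarrow> u = w"
  using tree unfolding directed_tree_def by auto

lemma acyclic_edges: "acyclic E"
  using tree unfolding directed_tree_def by auto

lemma connected: "u \<in> V \<Longrightarrow> v \<in> V \<Longrightarrow> (u, v) \<in> (E \<union> E\<inverse>)\<^sup>*"
  using tree unfolding directed_tree_def by auto

lemma par_eqI: "(u, v) \<in> E \<Longrightarrow> par E v = u"
  unfolding par_def using parent_unique by blast

lemma Chi_subset: "Chi E u \<subseteq> V"
  unfolding Chi_def using edges_subset by blast

lemma mem_Chi_iff: "v \<in> Chi E u \<longleftrightarrow> (u, v) \<in> E"
  unfolding Chi_def by simp

lemma Chi_empty_outside: "u \<notin> V \<Longrightarrow> Chi E u = {}"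
  using mem_Chi_iff edge_in_V by blast

lemma V_subset_closed:
  assumes "x0 \<in> X" "x0 \<in> V"
    and "\<And>x y. x \<in> X \<Longrightarrow> (x, y) \<in> E \<Longrightarrow> y \<in> X"
    and "\<And>x y. x \<in> X \<Longrightarrow> (y, x) \<in> E \<Longrightarrow> y \<in> X"
  shows "V \<subseteq> X"
proof
  fix v assume "v \<in> V"
  then have "(x0, v) \<in> (E \<union> E\<inverse>)\<^sup>*" using connected assms(2) by blast
  then show "v \<in> X"
    by (induction rule: rtrancl_induct) (use assms in blast)+
qed

lemma common_ancestor:
  assumes "u \<in> V" "w \<in> V"
  obtains c where "(c, u) \<in> E\<^sup>*" "(c, w) \<in> E\<^sup>*"
proof -
  have "(u, w) \<in> (E \<union> E\<inverse>)\<^sup>*" using connected assms by blast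
  then have "\<exists>c. (c, u) \<in> E\<^sup>* \<and> (c, w) \<in> E\<^sup>*"
  proof (induction rule: rtrancl_induct)
    case base then show ?case by blast
  next
    case (step w w')
    then obtain c where c: "(c, u) \<in> E\<^sup>*" "(c, w) \<in> E\<^sup>*" by blast
    show ?case
    proof (cases "(w, w') \<in> E")
      case True then show ?thesis using c by (meson rtrancl.rtrancl_into_rtrancl)
    next
      case False
      then have w'w: "(w', w) \<in> E" using step by blast
      show ?thesis
      proof (cases "c = w")
        case True
        then have "(w', u) \<in> E\<^sup>*" using w'w c by (meson converse_rtrancl_into_rtrancl)
        then show ?thesis by blast
      next
        case False
        \<comment> \<open>the path from \<open>c\<close> to \<open>w\<close> enters \<open>w\<close> through its unique parent \<open>w'\<close>\<close>
        then obtain y where "(c, y) \<in> E\<^sup>*" "(y, w) \<in> E"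
          using c by (meson rtrancl_eq_or_trancl tranclD2)
        then have "(c, w') \<in> E\<^sup>*" using w'w parent_unique by blast
        then show ?thesis using c by blast
      qed
    qed
  qed
  then show ?thesis using that by blast
qed

lemma root_ancestor:
  assumes "is_root V E r" "v \<in> V"
  shows "(r, v) \<in> E\<^sup>*"
proof -
  obtain c where c: "(c, r) \<in> E\<^sup>*" "(c, v) \<in> E\<^sup>*"
    using common_ancestor assms unfolding is_root_def by blast
  have "c = r"
  proof (rule ccontr)
    assume "c \<noteq> r"
    then obtain y where "(y, r) \<in> E" using c(1) by (meson rtrancl_eq_or_trancl tranclD2)
    then show False using assms(1) unfolding is_root_def by blast
  qed
  then show ?thesis using c by simp
qed

lemma nat_chain_trancl:
  assumes "\<And>n. (\<psi> n, \<psi> (Suc n)) \<in> E" "m < n"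
  shows "(\<psi> m, \<psi> n) \<in> E\<^sup>+"
  using assms(2)
  by (induction n) (auto simp: less_Suc_eq intro: assms(1) trancl_into_trancl)

lemma inj_nat_chain:
  assumes "\<And>n. (\<psi> n, \<psi> (Suc n)) \<in> E"
  shows "inj \<psi>"
proof (rule linorder_injI)
  fix m n :: nat assume "m < n"
  then have "(\<psi> m, \<psi> n) \<in> E\<^sup>+" using nat_chain_trancl[of \<psi>] assms by blast
  then show "\<psi> m \<noteq> \<psi> n" using acyclic_edges unfolding acyclic_def by metis
qed

lemma inj_int_chain:
  assumes "\<And>n. (\<psi> n, \<psi> (n + 1)) \<in> E"
  shows "inj (\<psi> :: int \<Rightarrow> 'a)"
proof (rule linorder_injI)
  fix a b :: int assume "a < b"
  have inj: "inj (\<lambda>k. \<psi> (a + int k))"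
  proof (rule inj_nat_chain)
    show "(\<psi> (a + int n), \<psi> (a + int (Suc n))) \<in> E" for n
      using assms[of "a + int n"] by (simp add: ac_simps)
  qed
  have "nat (b - a) \<noteq> 0" using \<open>a < b\<close> by simp
  then have "\<psi> (a + int 0) \<noteq> \<psi> (a + int (nat (b - a)))"
    using injD[OF inj, of 0 "nat (b - a)"] by auto
  then show "\<psi> a \<noteq> \<psi> b" using \<open>a < b\<close> by simp
qed

definition the_child :: "'a \<Rightarrow> 'a" where
  "the_child x = (THE y. (x, y) \<in> E)"

lemma deg_one_child:
  assumes "deg E x = 1"
  shows edge_the_child: "(x, the_child x) \<in> E"
    and the_child_unique: "(x, y) \<in> E \<Longrightarrow> y = the_child x"
proof -
  obtain c where "Chi E x = {c}" using assms unfolding deg_def by (meson card_1_singletonE)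
  then have c: "(x, y) \<in> E \<longleftrightarrow> y = c" for y unfolding Chi_def by blast
  then have "the_child x = c" unfolding the_child_def by auto
  then show "(x, the_child x) \<in> E" "(x, y) \<in> E \<Longrightarrow> y = the_child x" using c by auto
qed

definition all_deg_one :: bool where
  "all_deg_one \<longleftrightarrow> (\<forall>u\<in>V. deg E u = 1)"

lemma iso_from_chain:
  fixes \<psi> :: "'b::{plus,one} \<Rightarrow> 'a"
  assumes all_deg_one and "inj \<psi>" and \<psi>_V: "\<And>n. \<psi> n \<in> V"
    and chain: "\<And>n. (\<psi> n, \<psi> (n + 1)) \<in> E"
    and pred: "\<And>n y. (y, \<psi> n) \<in> E \<Longrightarrow> y \<in> range \<psi>"
  shows "\<exists>\<phi>. bij_betw \<phi> V (UNIV :: 'b set) \<and> (\<forall>u\<in>V. \<forall>v\<in>V. (u, v) \<in> E \<longleftrightarrow> \<phi> v = \<phi> u + 1)"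
proof (intro exI conjI ballI)
  have deg1: "deg E (\<psi> m) = 1" for m using \<open>all_deg_one\<close> \<psi>_V unfolding all_deg_one_def by blast
  then have succ: "(\<psi> m, y) \<in> E \<longleftrightarrow> y = \<psi> (m + 1)" for m y
    using chain the_child_unique by metis
  have "V \<subseteq> range \<psi>"
    by (rule V_subset_closed[of "\<psi> undefined"]) (use \<psi>_V succ pred in auto)
  then have bij: "bij_betw \<psi> UNIV V" unfolding bij_betw_def using \<open>inj \<psi>\<close> \<psi>_V by auto
  let ?\<phi> = "the_inv_into UNIV \<psi>"
  show "bij_betw ?\<phi> V UNIV" using bij by (rule bij_betw_the_inv_into)
  fix u v assume "u \<in> V" "v \<in> V"
  then obtain m n where mn: "u = \<psi> m" "v = \<psi> n" by (metis bij_betw_obtain_preimage[OF bij])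
  have "(\<psi> m, \<psi> n) \<in> E \<longleftrightarrow> n = m + 1" using succ \<open>inj \<psi>\<close> by (simp add: inj_eq)
  then show "(u, v) \<in> E \<longleftrightarrow> ?\<phi> v = ?\<phi> u + 1"
    using mn the_inv_into_f_f[OF \<open>inj \<psi>\<close>] by simp
qed

lemma iso_imp_all_deg_one:
  fixes \<phi> :: "'a \<Rightarrow> 'b::{plus,one}"
  assumes bij: "bij_betw \<phi> V (UNIV :: 'b set)"
    and iso: "\<forall>u\<in>V. \<forall>v\<in>V. (u, v) \<in> E \<longleftrightarrow> \<phi> v = \<phi> u + 1"
  shows all_deg_one
  unfolding all_deg_one_def
proof
  fix u assume u: "u \<in> V"
  obtain v where v: "v \<in> V" "\<phi> v = \<phi> u + 1" by (rule bij_betw_obtain_preimage[OF bij]) simp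
  have "Chi E u = {v}"
  proof (intro equalityI subsetI)
    fix w assume "w \<in> Chi E u"
    then have "w \<in> V" "(u, w) \<in> E" using Chi_subset mem_Chi_iff by auto
    then have "w \<in> V" "\<phi> w = \<phi> v" using iso u v by auto
    then show "w \<in> {v}" using v bij unfolding bij_betw_def inj_on_def by auto
  qed (use u v iso mem_Chi_iff in auto)
  then show "deg E u = 1" unfolding deg_def by simp
qed

lemma iso_Zplus_imp: "iso_Zplus V E \<Longrightarrow> rooted V E \<and> all_deg_one"
proof -
  assume "iso_Zplus V E"
  then obtain \<phi> where bij: "bij_betw \<phi> V (UNIV :: nat set)"
    and iso: "\<forall>u\<in>V. \<forall>v\<in>V. (u, v) \<in> E \<longleftrightarrow> \<phi> v = \<phi> u + 1"
    unfolding iso_Zplus_def by blast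
  obtain r where r: "r \<in> V" "\<phi> r = 0" by (rule bij_betw_obtain_preimage[OF bij]) simp
  have "(u, r) \<notin> E" for u
    using r iso edge_in_V[of u r] by auto
  then have "is_root V E r" unfolding is_root_def using r by blast
  then show ?thesis unfolding rooted_def using iso_imp_all_deg_one[OF bij iso] by blast
qed

lemma iso_Z_imp: "iso_Z V E \<Longrightarrow> \<not> rooted V E \<and> all_deg_one"
proof -
  assume "iso_Z V E"
  then obtain \<phi> where bij: "bij_betw \<phi> V (UNIV :: int set)"
    and iso: "\<forall>u\<in>V. \<forall>v\<in>V. (u, v) \<in> E \<longleftrightarrow> \<phi> v = \<phi> u + 1"
    unfolding iso_Z_def by blast
  have "\<not> is_root V E r" for r
  proof
    assume r: "is_root V E r"
    obtain u where "u \<in> V" "\<phi> u = \<phi> r - 1" by (rule bij_betw_obtain_preimage[OF bij]) simp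
    moreover have "r \<in> V" using r unfolding is_root_def by blast
    ultimately have "(u, r) \<in> E" using iso by simp
    then show False using r unfolding is_root_def by blast
  qed
  then show ?thesis unfolding rooted_def using iso_imp_all_deg_one[OF bij iso] by blast
qed

lemma rooted_imp_iso_Zplus:
  assumes "rooted V E" all_deg_one
  shows "iso_Zplus V E"
proof -
  obtain r where r: "is_root V E r" using assms(1) unfolding rooted_def by blast
  then have "r \<in> V" unfolding is_root_def by blast
  have deg1: "x \<in> V \<Longrightarrow> deg E x = 1" for x using assms(2) unfolding all_deg_one_def by blast
  define \<psi> where "\<psi> n = (the_child ^^ n) r" for n
  have \<psi>_V: "\<psi> n \<in> V" for n
    by (induction n) (use \<open>r \<in> V\<close> edge_in_V edge_the_child[OF deg1] in \<open>auto simp: \<psi>_def\<close>)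
  have chain: "(\<psi> n, \<psi> (Suc n)) \<in> E" for n
    using edge_the_child[OF deg1[OF \<psi>_V]] by (simp add: \<psi>_def)
  have "y \<in> range \<psi>" if "(y, \<psi> n) \<in> E" for n y
  proof (cases n)
    case 0 then show ?thesis using that r unfolding is_root_def \<psi>_def by auto
  next
    case (Suc m) then show ?thesis using chain[of m] that parent_unique by blast
  qed
  then show ?thesis
    unfolding iso_Zplus_def using iso_from_chain[of \<psi>, OF assms(2) inj_nat_chain[of \<psi>, OF chain] \<psi>_V] chain by simp
qed

lemma unrooted_imp_iso_Z:
  assumes "\<not> rooted V E" all_deg_one
  shows "iso_Z V E"
proof -
  have deg1: "x \<in> V \<Longrightarrow> deg E x = 1" for x using assms(2) unfolding all_deg_one_def by blast
  have par_edge: "x \<in> V \<Longrightarrow> (par E x, x) \<in> E" for x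
    using assms(1) par_eqI unfolding rooted_def is_root_def by metis
  have child_par: "x \<in> V \<Longrightarrow> the_child (par E x) = x" for x
    using the_child_unique[OF deg1] par_edge edge_in_V by metis
  have child_V: "x \<in> V \<Longrightarrow> the_child x \<in> V" for x using edge_the_child[OF deg1] edge_in_V by blast
  have par_V: "x \<in> V \<Longrightarrow> par E x \<in> V" for x using par_edge edge_in_V by blast
  obtain v0 where "v0 \<in> V" using tree unfolding directed_tree_def by auto
  define \<psi> where "\<psi> n = (if n \<ge> 0 then (the_child ^^ nat n) v0 else (par E ^^ nat (- n)) v0)"
    for n :: int
  have iter_V: "(the_child ^^ n) v0 \<in> V" "(par E ^^ n) v0 \<in> V" for n
    by (induction n) (auto simp: \<open>v0 \<in> V\<close> child_V par_V)
  then have \<psi>_V: "\<psi> n \<in> V" for n unfolding \<psi>_def by simp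
  have "\<psi> (n + 1) = the_child (\<psi> n)" for n
  proof (cases "n \<ge> 0")
    case True
    then have "nat (n + 1) = Suc (nat n)" by simp
    then show ?thesis unfolding \<psi>_def using True by simp
  next
    case False
    then have "nat (- n) = Suc (nat (- (n + 1)))" by simp
    then have "\<psi> n = par E ((par E ^^ nat (- (n + 1))) v0)" unfolding \<psi>_def using False by simp
    moreover have "\<psi> (n + 1) = (par E ^^ nat (- (n + 1))) v0"
      unfolding \<psi>_def using False by (cases "n + 1 = 0") auto
    ultimately show ?thesis using child_par iter_V by simp
  qed
  then have chain: "(\<psi> n, \<psi> (n + 1)) \<in> E" for n
    using edge_the_child[OF deg1[OF \<psi>_V]] by simp
  have "y \<in> range \<psi>" if "(y, \<psi> n) \<in> E" for n y
    using chain[of "n - 1"] that parent_unique by (metis diff_add_cancel rangeI)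
  then show ?thesis
    unfolding iso_Z_def using iso_from_chain[of \<psi>, OF assms(2) inj_int_chain[of \<psi>, OF chain] \<psi>_V] chain by simp
qed

lemma iso_Zplus_iff: "iso_Zplus V E \<longleftrightarrow> rooted V E \<and> all_deg_one"
  using iso_Zplus_imp rooted_imp_iso_Zplus by blast

lemma iso_Z_iff: "iso_Z V E \<longleftrightarrow> \<not> rooted V E \<and> all_deg_one"
  using iso_Z_imp unrooted_imp_iso_Z by blast

end

locale fin_dtree = dtree +
  assumes finite_Chi: "finite (Chi E u)"
begin

definition child_deg_sum :: "'a \<Rightarrow> nat" where
  "child_deg_sum u = (\<Sum>v\<in>Chi E u. deg E v)"

definition deg_balanced :: bool where
  "deg_balanced \<longleftrightarrow> (\<forall>u\<in>V. 1 + child_deg_sum u = 2 * deg E u)"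

definition deg_inherited :: bool where
  "deg_inherited \<longleftrightarrow> (\<forall>u v. (u, v) \<in> E \<longrightarrow> deg E v = 1 \<or> deg E v = deg E u)"

definition siblings_deg_one :: bool where
  "siblings_deg_one \<longleftrightarrow>
     (\<forall>p v w. (p, v) \<in> E \<longrightarrow> (p, w) \<in> E \<longrightarrow> v \<noteq> w \<longrightarrow> deg E v \<noteq> 1 \<longrightarrow> deg E w = 1)"

definition roots_deg_one :: bool where
  "roots_deg_one \<longleftrightarrow> (\<forall>v\<in>V. (\<forall>u. (u, v) \<notin> E) \<longrightarrow> deg E v = 1)"

lemma deg_pos_if_edge: "(u, v) \<in> E \<Longrightarrow> deg E u \<ge> 1"
  unfolding deg_def using finite_Chi[of u] mem_Chi_iff[of v u]
  by (metis One_nat_def Suc_leI card_gt_0_iff empty_iff)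

lemma balanced_deg_pos: "deg_balanced \<Longrightarrow> u \<in> V \<Longrightarrow> deg E u \<ge> 1"
  unfolding deg_balanced_def by fastforce

lemma child_deg_sum_remove:
  "(u, v) \<in> E \<Longrightarrow> child_deg_sum u = deg E v + (\<Sum>w\<in>Chi E u - {v}. deg E w)"
  unfolding child_deg_sum_def using sum.remove[OF finite_Chi] mem_Chi_iff by blast

lemma child_deg_sum_two_levels:
  assumes "\<forall>w\<in>Chi E v. deg E w = 1 \<or> deg E w = L" "L \<noteq> 1"
  defines "A \<equiv> {w \<in> Chi E v. deg E w = L}" and "B \<equiv> {w \<in> Chi E v. deg E w = 1}"
  shows "child_deg_sum v = L * card A + card B" "card A + card B = deg E v"
proof -
  have split: "Chi E v = A \<union> B" and disj: "A \<inter> B = {}"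
    using assms(1,2) unfolding A_def B_def by auto
  have fin: "finite A" "finite B" using finite_Chi unfolding A_def B_def by auto
  show "card A + card B = deg E v"
    unfolding deg_def split using card_Un_disjoint[OF fin disj] by simp
  have "child_deg_sum v = sum (deg E) A + sum (deg E) B"
    unfolding child_deg_sum_def split by (rule sum.union_disjoint[OF fin disj])
  then show "child_deg_sum v = L * card A + card B" unfolding A_def B_def by simp
qed

lemma all_deg_one_imp_conditions:
  "all_deg_one \<Longrightarrow> deg_balanced \<and> deg_inherited \<and> roots_deg_one"
  unfolding all_deg_one_def deg_balanced_def deg_inherited_def roots_deg_one_def
    child_deg_sum_def deg_def
  using Chi_subset edge_in_V by (auto simp: subset_iff)

lemma balanced_siblings_imp_inherited:
  assumes deg_balanced siblings_deg_one
  shows deg_inherited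
  unfolding deg_inherited_def
proof (intro allI impI)
  fix u v assume uv: "(u, v) \<in> E"
  show "deg E v = 1 \<or> deg E v = deg E u"
  proof (cases "deg E v = 1")
    case False
    then have "w \<in> Chi E u - {v} \<Longrightarrow> deg E w = 1" for w
      using assms(2) uv mem_Chi_iff unfolding siblings_deg_one_def by blast
    then have "(\<Sum>w\<in>Chi E u - {v}. deg E w) = deg E u - 1"
      using uv mem_Chi_iff unfolding deg_def by simp
    then have "child_deg_sum u = deg E v + (deg E u - 1)" using child_deg_sum_remove[OF uv] by simp
    moreover have "1 + child_deg_sum u = 2 * deg E u"
      using assms(1) edge_in_V[OF uv] unfolding deg_balanced_def by blast
    ultimately show ?thesis using deg_pos_if_edge[OF uv] by linarith
  qed simp
qed

lemma balanced_inherited_imp_siblings: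
  assumes deg_balanced deg_inherited
  shows siblings_deg_one
  unfolding siblings_deg_one_def
proof (intro allI impI, rule ccontr)
  fix p v w assume pv: "(p, v) \<in> E" and pw: "(p, w) \<in> E" and "v \<noteq> w"
    and "deg E v \<noteq> 1" "deg E w \<noteq> 1"
  then have dv: "deg E v = deg E p" and dw: "deg E w = deg E p"
    using assms(2) unfolding deg_inherited_def by blast+
  \<comment> \<open>two children of degree \<open>deg p\<close> and the others of degree \<open>\<ge> 1\<close> give too large a sum\<close>
  let ?R = "Chi E p - {v} - {w}"
  have w: "w \<in> Chi E p - {v}" using pw \<open>v \<noteq> w\<close> mem_Chi_iff by blast
  have "x \<in> ?R \<Longrightarrow> 1 \<le> deg E x" for x
    using assms(2) deg_pos_if_edge[OF pv] mem_Chi_iff unfolding deg_inherited_def by fastforce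
  then have "card ?R \<le> (\<Sum>x\<in>?R. deg E x)"
    using sum_mono[of ?R "\<lambda>_. 1" "deg E"] by simp
  moreover have "card ?R = deg E p - 2"
    using w pv mem_Chi_iff unfolding deg_def by (simp add: card_Diff_singleton)
  moreover have "(\<Sum>x\<in>Chi E p - {v}. deg E x) = deg E w + (\<Sum>x\<in>?R. deg E x)"
    using sum.remove[of "Chi E p - {v}" w] finite_Chi w by blast
  moreover have "card {v, w} \<le> deg E p"
    unfolding deg_def using pv pw mem_Chi_iff finite_Chi by (intro card_mono) auto
  moreover have "1 + child_deg_sum p = 2 * deg E p"
    using assms(1) edge_in_V[OF pv] unfolding deg_balanced_def by blast
  ultimately show False
    using child_deg_sum_remove[OF pv] dv dw \<open>v \<noteq> w\<close> by simp
qed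

lemma inherited_descendant_deg:
  assumes deg_inherited "(c, w) \<in> E\<^sup>*"
  shows "deg E w = 1 \<or> deg E w = deg E c"
  using assms(2)
proof induction
  case (step y z)
  then show ?case using assms(1) unfolding deg_inherited_def by metis
qed simp

lemma inherited_ancestor_deg:
  assumes deg_inherited "(a, x) \<in> E\<^sup>*" "deg E x \<ge> 2"
  shows "deg E a = deg E x"
  using assms(2)
proof (induction rule: converse_rtrancl_induct)
  case (step y z)
  then show ?case using assms(1,3) unfolding deg_inherited_def by fastforce
qed simp

lemma rooted_conditions_iff_all_deg_one:
  assumes "rooted V E"
  shows "deg_balanced \<and> deg_inherited \<and> roots_deg_one \<longleftrightarrow> all_deg_one"
proof
  assume cond: "deg_balanced \<and> deg_inherited \<and> roots_deg_one"
  obtain r where r: "is_root V E r" using assms unfolding rooted_def by blast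
  then have "deg E r = 1" using cond unfolding roots_deg_one_def is_root_def by blast
  then show all_deg_one
    unfolding all_deg_one_def using inherited_descendant_deg root_ancestor[OF r] cond by fastforce
qed (use all_deg_one_imp_conditions in blast)

lemma balanced_inherited_imp_quasi_brownian_tree:
  assumes deg_balanced deg_inherited "\<not> all_deg_one"
  shows "quasi_brownian_tree V E"
proof -
  obtain u where u: "u \<in> V" "deg E u \<noteq> 1" using assms(3) unfolding all_deg_one_def by blast
  let ?L = "deg E u"
  have "1 + child_deg_sum u = 2 * ?L" using assms(1) u unfolding deg_balanced_def by blast
  then have L: "?L \<ge> 2" using u by linarith
  \<comment> \<open>every vertex descends from a common ancestor with \<open>u\<close>, which has degree \<open>deg u\<close>\<close>
  have all: "deg E w = 1 \<or> deg E w = ?L" if w: "w \<in> V" for w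
  proof -
    obtain c where c: "(c, u) \<in> E\<^sup>*" "(c, w) \<in> E\<^sup>*" by (rule common_ancestor[OF u(1) w])
    then show ?thesis
      using inherited_ancestor_deg[OF assms(2) c(1) L] inherited_descendant_deg[OF assms(2) c(2)] by simp
  qed
  have counts: "card {w \<in> Chi E v. deg E w = ?L} = 1 \<and> card {w \<in> Chi E v. deg E w = 1} = ?L - 1"
    if "v \<in> V" "deg E v = ?L" for v
  proof -
    have "\<forall>w\<in>Chi E v. deg E w = 1 \<or> deg E w = ?L" using all Chi_subset by blast
    note two = child_deg_sum_two_levels[OF this u(2)]
    let ?a = "card {w \<in> Chi E v. deg E w = ?L}"
    have "1 + child_deg_sum v = 2 * ?L" using assms(1) that unfolding deg_balanced_def by simp
    moreover have "?L * ?a = (?L - 1) * ?a + ?a" using L by (cases ?L) auto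
    ultimately have "(?L - 1) * ?a = ?L - 1" using two that by linarith
    then have "?a = 1" using L by simp
    then show ?thesis using two that by simp
  qed
  have "deg E w = 1" if "deg E v = 1" "w \<in> Chi E v" for v w
    using assms(2) that mem_Chi_iff unfolding deg_inherited_def by force
  then have "quasi_brownian_tree_val V E ?L"
    unfolding quasi_brownian_tree_val_def using u all counts by blast
  then show ?thesis unfolding quasi_brownian_tree_def using L by blast
qed

lemma quasi_brownian_tree_imp_balanced_inherited:
  assumes "quasi_brownian_tree V E"
  shows "deg_balanced \<and> deg_inherited"
proof -
  obtain l where "l \<ge> 2" and qb: "quasi_brownian_tree_val V E l"
    using assms unfolding quasi_brownian_tree_def by blast
  have degs: "v \<in> V \<Longrightarrow> deg E v = 1 \<or> deg E v = l"
    and light: "v \<in> V \<Longrightarrow> deg E v = 1 \<Longrightarrow> w \<in> Chi E v \<Longrightarrow> deg E w = 1"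
    and heavy: "v \<in> V \<Longrightarrow> deg E v = l \<Longrightarrow>
      card {w \<in> Chi E v. deg E w = l} = 1 \<and> card {w \<in> Chi E v. deg E w = 1} = l - 1" for v w
    using qb unfolding quasi_brownian_tree_val_def by blast+
  have deg_inherited
    unfolding deg_inherited_def using degs light mem_Chi_iff edge_in_V by metis
  moreover have deg_balanced
    unfolding deg_balanced_def
  proof
    fix u assume u: "u \<in> V"
    have "\<forall>w\<in>Chi E u. deg E w = 1 \<or> deg E w = l" using degs Chi_subset by blast
    note two = child_deg_sum_two_levels[OF this]
    show "1 + child_deg_sum u = 2 * deg E u"
    proof (cases "deg E u = 1")
      case True
      then have "child_deg_sum u = card (Chi E u)"
        unfolding child_deg_sum_def using light[OF u True] by simp
      then show ?thesis using True unfolding deg_def by simp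
    next
      case False
      then have "deg E u = l" using degs u by blast
      then show ?thesis using two heavy[OF u] \<open>l \<ge> 2\<close> by simp
    qed
  qed
  ultimately show ?thesis by blast
qed

lemma balanced_inherited_iff:
  "deg_balanced \<and> deg_inherited \<longleftrightarrow> all_deg_one \<or> quasi_brownian_tree V E"
  using all_deg_one_imp_conditions balanced_inherited_imp_quasi_brownian_tree
    quasi_brownian_tree_imp_balanced_inherited by blast

end

section \<open>Square-summable functions and positive operators\<close>

lemma ell2_vanishes: "f \<in> ell2 V \<Longrightarrow> x \<notin> V \<Longrightarrow> f x = 0"
  by (simp add: ell2_def)

lemma ell2_summable: "f \<in> ell2 V \<Longrightarrow> (\<lambda>x. (cmod (f x))\<^sup>2) summable_on V"
  by (simp add: ell2_def)

lemma ell2_zero: "(\<lambda>_. 0) \<in> ell2 V"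
  unfolding ell2_def by simp

lemma ell2_dominated:
  assumes "f \<in> ell2 V" "g \<in> ell2 V" "\<And>x. x \<notin> V \<Longrightarrow> h x = 0"
    and "\<And>x. x \<in> V \<Longrightarrow> (cmod (h x))\<^sup>2 \<le> c * ((cmod (f x))\<^sup>2 + (cmod (g x))\<^sup>2)"
  shows "h \<in> ell2 V"
proof -
  have "(\<lambda>x. c * ((cmod (f x))\<^sup>2 + (cmod (g x))\<^sup>2)) summable_on V"
    using summable_on_add[OF ell2_summable[OF assms(1)] ell2_summable[OF assms(2)]]
    by (rule summable_on_cmult_right)
  then have "(\<lambda>x. (cmod (h x))\<^sup>2) summable_on V"
    by (rule summable_on_comparison_test) (use assms in auto)
  then show ?thesis using assms(3) unfolding ell2_def by blast
qed

lemma ell2_lincomb: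
  assumes "f \<in> ell2 V" "g \<in> ell2 V"
  shows "(\<lambda>x. a * f x + b * g x) \<in> ell2 V"
proof (rule ell2_dominated[OF assms, where c = "(cmod a)\<^sup>2 + (cmod b)\<^sup>2"])
  show "x \<notin> V \<Longrightarrow> a * f x + b * g x = 0" for x
    using ell2_vanishes[OF assms(1)] ell2_vanishes[OF assms(2)] by simp
  fix x
  let ?A = "cmod a" and ?B = "cmod b" and ?F = "cmod (f x)" and ?G = "cmod (g x)"
  have "cmod (a * f x + b * g x) \<le> ?A * ?F + ?B * ?G"
    by (metis norm_mult norm_triangle_ineq)
  then have "(cmod (a * f x + b * g x))\<^sup>2 \<le> (?A * ?F + ?B * ?G)\<^sup>2" by (simp add: power_mono)
  also have "\<dots> \<le> (?A\<^sup>2 + ?B\<^sup>2) * (?F\<^sup>2 + ?G\<^sup>2)"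
  proof -
    have "0 \<le> (?A * ?G - ?B * ?F)\<^sup>2" by simp
    then show ?thesis by (simp add: power2_eq_square algebra_simps)
  qed
  finally show "(cmod (a * f x + b * g x))\<^sup>2 \<le> (?A\<^sup>2 + ?B\<^sup>2) * (?F\<^sup>2 + ?G\<^sup>2)" .
qed

lemma ell2_restrict: "f \<in> ell2 V \<Longrightarrow> (\<lambda>x. if P x then f x else 0) \<in> ell2 V"
  by (rule ell2_dominated[where c = 1]) (auto simp: ell2_vanishes)

lemma ell2_bounded_mult:
  assumes "f \<in> ell2 V" "\<And>x. x \<in> V \<Longrightarrow> cmod (c x) \<le> K"
  shows "(\<lambda>x. c x * f x) \<in> ell2 V"
proof (rule ell2_dominated[OF assms(1) ell2_zero, where c = "K\<^sup>2"])
  show "x \<notin> V \<Longrightarrow> c x * f x = 0" for x using assms(1) ell2_vanishes by fastforce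
  fix x assume "x \<in> V"
  then have "(cmod (c x))\<^sup>2 * (cmod (f x))\<^sup>2 \<le> K\<^sup>2 * (cmod (f x))\<^sup>2"
    using assms(2) by (intro mult_right_mono power_mono) auto
  then show "(cmod (c x * f x))\<^sup>2 \<le> K\<^sup>2 * ((cmod (f x))\<^sup>2 + (cmod 0)\<^sup>2)"
    by (simp add: norm_mult power_mult_distrib)
qed

lemma ell2_finite_support:
  assumes "finite F" "F \<subseteq> V" "\<And>x. x \<notin> F \<Longrightarrow> h x = 0"
  shows "h \<in> ell2 V"
proof -
  have "finite {x \<in> V. (cmod (h x))\<^sup>2 \<noteq> 0}"
    using assms by (auto intro: finite_subset[OF _ assms(1)])
  then have "(\<lambda>x. (cmod (h x))\<^sup>2) summable_on V" by (rule finite_nonzero_values_imp_summable_on)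
  then show ?thesis unfolding ell2_def using assms by blast
qed

lemma ell2_inner_summable:
  assumes "f \<in> ell2 V" "g \<in> ell2 V"
  shows "(\<lambda>x. cnj (f x) * g x) summable_on V"
proof -
  have "(\<lambda>x. norm (cnj (f x) * g x)) summable_on V"
  proof (rule Infinite_Sum.abs_summable_on_comparison_test')
    show "(\<lambda>x. (cmod (f x))\<^sup>2 + (cmod (g x))\<^sup>2) summable_on V"
      using summable_on_add[OF ell2_summable[OF assms(1)] ell2_summable[OF assms(2)]] .
    fix x
    have "0 \<le> (cmod (f x) - cmod (g x))\<^sup>2" by simp
    then have "2 * (cmod (f x) * cmod (g x)) \<le> (cmod (f x))\<^sup>2 + (cmod (g x))\<^sup>2"
      by (simp add: power2_diff)
    moreover have "norm (cnj (f x) * g x) = cmod (f x) * cmod (g x)" "0 \<le> cmod (f x) * cmod (g x)"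
      by (simp_all add: norm_mult)
    ultimately show "norm (cnj (f x) * g x) \<le> (cmod (f x))\<^sup>2 + (cmod (g x))\<^sup>2" by linarith
  qed
  then show ?thesis using summable_on_iff_abs_summable_on_complex by blast
qed

lemma ell2_inner_cnj: "ell2_inner V f g = cnj (ell2_inner V g f)"
  unfolding ell2_inner_def by (simp flip: infsum_cnj add: mult.commute)

lemma ell2_inner_lincomb_right:
  assumes "p \<in> ell2 V" "q \<in> ell2 V" "r \<in> ell2 V"
  shows "ell2_inner V r (\<lambda>x. a * p x + b * q x) = a * ell2_inner V r p + b * ell2_inner V r q"
proof -
  have s: "(\<lambda>x. cnj (r x) * p x) summable_on V" "(\<lambda>x. cnj (r x) * q x) summable_on V"
    using ell2_inner_summable assms by blast+
  have "ell2_inner V r (\<lambda>x. a * p x + b * q x)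
      = (\<Sum>\<^sub>\<infinity>x\<in>V. a * (cnj (r x) * p x) + b * (cnj (r x) * q x))"
    unfolding ell2_inner_def by (rule infsum_cong) (simp add: algebra_simps)
  also have "\<dots> = (\<Sum>\<^sub>\<infinity>x\<in>V. a * (cnj (r x) * p x)) + (\<Sum>\<^sub>\<infinity>x\<in>V. b * (cnj (r x) * q x))"
    by (rule infsum_add) (use summable_on_cmult_right s in auto)
  also have "\<dots> = a * ell2_inner V r p + b * ell2_inner V r q"
    unfolding ell2_inner_def by (simp add: infsum_cmult_right s)
  finally show ?thesis .
qed

lemma ell2_inner_scale_left:
  assumes "p \<in> ell2 V" "q \<in> ell2 V"
  shows "ell2_inner V (\<lambda>x. c * p x) q = cnj c * ell2_inner V p q"
proof -
  have "ell2_inner V (\<lambda>x. c * p x) q = (\<Sum>\<^sub>\<infinity>x\<in>V. cnj c * (cnj (p x) * q x))"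
    unfolding ell2_inner_def by (rule infsum_cong) (simp add: algebra_simps)
  also have "\<dots> = cnj c * ell2_inner V p q"
    unfolding ell2_inner_def by (rule infsum_cmult_right) (use ell2_inner_summable assms in blast)
  finally show ?thesis .
qed

lemma infsum_complex_of_real:
  "g summable_on A \<Longrightarrow> (\<Sum>\<^sub>\<infinity>x\<in>A. complex_of_real (g x)) = of_real (infsum g A)"
  by (rule infsumI) (rule has_sum_of_real, simp)

lemma ell2_inner_self:
  assumes "f \<in> ell2 V"
  shows "ell2_inner V f f = of_real (\<Sum>\<^sub>\<infinity>x\<in>V. (cmod (f x))\<^sup>2)"
proof -
  have "ell2_inner V f f = (\<Sum>\<^sub>\<infinity>x\<in>V. complex_of_real ((cmod (f x))\<^sup>2))"
    unfolding ell2_inner_def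
    by (intro infsum_cong) (metis complex_norm_square mult.commute of_real_power)
  then show ?thesis using infsum_complex_of_real[OF ell2_summable[OF assms]] by simp
qed

lemma ell2_inner_self_le_0_imp_zero:
  assumes p: "p \<in> ell2 V" and "Re (ell2_inner V p p) \<le> 0"
  shows "p = (\<lambda>_. 0)"
proof
  fix x show "p x = 0"
  proof (cases "x \<in> V")
    case True
    have "(\<Sum>\<^sub>\<infinity>x\<in>V. (cmod (p x))\<^sup>2) \<le> 0" using assms ell2_inner_self[OF p] by simp
    then have "(cmod (p x))\<^sup>2 = 0" using nonneg_infsum_le_0D[OF _ ell2_summable[OF p] _ True] by simp
    then show ?thesis by simp
  qed (use ell2_vanishes[OF p] in simp)
qed

definition ket :: "'a \<Rightarrow> 'a \<Rightarrow> complex" where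
  "ket x = (\<lambda>y. if y = x then 1 else 0)"

lemma ket_ell2: "x \<in> V \<Longrightarrow> ket x \<in> ell2 V"
  by (rule ell2_finite_support[of "{x}"]) (auto simp: ket_def)

lemma infsum_single_support:
  assumes "x \<in> A" "\<And>y. y \<in> A \<Longrightarrow> y \<noteq> x \<Longrightarrow> h y = 0"
  shows "infsum h A = h x"
proof -
  have "infsum h A = infsum h {x}" by (rule infsum_cong_neutral) (use assms in auto)
  then show ?thesis by simp
qed

lemma ell2_inner_ket: "x \<in> V \<Longrightarrow> ell2_inner V (ket x) h = h x"
  unfolding ell2_inner_def by (subst infsum_single_support[of x]) (auto simp: ket_def)

lemma ell2_norm_ket: "x \<in> V \<Longrightarrow> ell2_norm V (ket x) = 1"
  unfolding ell2_norm_def by (subst infsum_single_support[of x]) (auto simp: ket_def)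

lemma sum_ket: "finite A \<Longrightarrow> (\<Sum>y\<in>A. c y * ket v y) = (if v \<in> A then c v else 0)"
  unfolding ket_def by (simp add: if_distrib cong: if_cong)

lemma adjoint_eqI:
  assumes A_ell2: "\<And>g. g \<in> ell2 V \<Longrightarrow> A g \<in> ell2 V"
    and A_adj: "\<And>f g. f \<in> ell2 V \<Longrightarrow> g \<in> ell2 V \<Longrightarrow> ell2_inner V (T f) g = ell2_inner V f (A g)"
    and A_out: "\<And>g. g \<notin> ell2 V \<Longrightarrow> A g = (\<lambda>_. 0)"
  shows "adjoint V T = A"
  unfolding adjoint_def
proof (rule the_equality)
  show "(\<forall>g\<in>ell2 V. A g \<in> ell2 V) \<and>
      (\<forall>f\<in>ell2 V. \<forall>g\<in>ell2 V. ell2_inner V (T f) g = ell2_inner V f (A g)) \<and>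
      (\<forall>g. g \<notin> ell2 V \<longrightarrow> A g = (\<lambda>_. 0))" using assms by blast
  fix B assume "(\<forall>g\<in>ell2 V. B g \<in> ell2 V) \<and>
      (\<forall>f\<in>ell2 V. \<forall>g\<in>ell2 V. ell2_inner V (T f) g = ell2_inner V f (B g)) \<and>
      (\<forall>g. g \<notin> ell2 V \<longrightarrow> B g = (\<lambda>_. 0))"
  then have B_ell2: "\<And>g. g \<in> ell2 V \<Longrightarrow> B g \<in> ell2 V"
    and B_adj: "\<And>f g. f \<in> ell2 V \<Longrightarrow> g \<in> ell2 V \<Longrightarrow> ell2_inner V (T f) g = ell2_inner V f (B g)"
    and B_out: "\<And>g. g \<notin> ell2 V \<Longrightarrow> B g = (\<lambda>_. 0)" by blast+
  \<comment> \<open>pair both candidates with the basis vectors\<close>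
  have "B g x = A g x" if g: "g \<in> ell2 V" for g x
  proof (cases "x \<in> V")
    case True
    then show ?thesis
      using B_adj[OF ket_ell2 g] A_adj[OF ket_ell2 g] ell2_inner_ket[OF True] by metis
  qed (use ell2_vanishes B_ell2 A_ell2 g in metis)
  then show "B = A" using A_out B_out by fastforce
qed

lemma positive_op_no_negative_eigenvalue:
  assumes "positive_op V R" "m \<in> ell2 V" "R m = (\<lambda>x. - of_real s * m x)" "s > 0"
  shows "m = (\<lambda>_. 0)"
proof (rule ell2_inner_self_le_0_imp_zero[OF assms(2)])
  have "0 \<le> Re (ell2_inner V (R m) m)" using assms(1,2) unfolding positive_op_def by blast
  also have "ell2_inner V (R m) m = - of_real s * ell2_inner V m m"
    unfolding assms(3) using ell2_inner_scale_left[OF assms(2) assms(2), of "- of_real s"] by simp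
  finally show "Re (ell2_inner V m m) \<le> 0" using \<open>s > 0\<close> by (simp add: mult_le_0_iff)
qed

lemma positive_op_square_zero:
  assumes bounded: "bounded_op V R" and pos: "positive_op V R"
    and h: "h \<in> ell2 V" and RRh: "R (R h) = (\<lambda>_. 0)"
  shows "R h = (\<lambda>_. 0)"
proof -
  define r where "r = R h"
  have r: "r \<in> ell2 V" unfolding r_def using bounded h unfolding bounded_op_def by blast
  \<comment> \<open>positivity of \<open>R\<close> at \<open>h + t r\<close> for all real \<open>t\<close> forces \<open>\<langle>r, r\<rangle> = 0\<close>\<close>
  have ineq: "0 \<le> Re (ell2_inner V r h) + t * Re (ell2_inner V r r)" for t :: real
  proof -
    define p where "p = (\<lambda>x. 1 * h x + complex_of_real t * r x)"
    have p: "p \<in> ell2 V" unfolding p_def by (rule ell2_lincomb[OF h r])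
    have "R p = (\<lambda>x. 1 * R h x + complex_of_real t * R r x)"
      unfolding p_def using bounded h r unfolding bounded_op_def by blast
    then have "R p = r" using RRh unfolding r_def by simp
    moreover have "ell2_inner V r p = 1 * ell2_inner V r h + complex_of_real t * ell2_inner V r r"
      unfolding p_def by (rule ell2_inner_lincomb_right[OF h r r])
    moreover have "0 \<le> Re (ell2_inner V (R p) p)" using pos p unfolding positive_op_def by blast
    ultimately show ?thesis by simp
  qed
  have "Re (ell2_inner V r r) \<le> 0"
  proof (rule ccontr)
    define c N where "c = Re (ell2_inner V r h)" and "N = Re (ell2_inner V r r)"
    assume "\<not> Re (ell2_inner V r r) \<le> 0"
    then have "N > 0" unfolding N_def by simp
    have "0 \<le> c + (- (\<bar>c\<bar> + 1) / N) * N" using ineq unfolding c_def N_def by blast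
    then show False using \<open>N > 0\<close> by simp
  qed
  then show ?thesis using ell2_inner_self_le_0_imp_zero[OF r] unfolding r_def by blast
qed

lemma positive_op_sqrt_eigenvector:
  assumes bounded: "bounded_op V R" and pos: "positive_op V R"
    and h: "h \<in> ell2 V" and RRh: "R (R h) = (\<lambda>x. of_real c * h x)" and "c \<ge> 0"
  shows "R h = (\<lambda>x. of_real (sqrt c) * h x)"
proof (cases "c = 0")
  case True
  then show ?thesis using positive_op_square_zero[OF bounded pos h] RRh by simp
next
  case False
  define s where "s = sqrt c"
  have "s > 0" "complex_of_real c = of_real s * of_real s"
    using \<open>c \<ge> 0\<close> False unfolding s_def by (simp_all flip: of_real_mult)
  have Rh: "R h \<in> ell2 V" using bounded h unfolding bounded_op_def by blast
  \<comment> \<open>\<open>R h - s h\<close> is an eigenvector of \<open>R\<close> for the eigenvalue \<open>-s\<close>\<close>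
  define m where "m = (\<lambda>x. 1 * R h x + (- of_real s) * h x)"
  have m: "m \<in> ell2 V" unfolding m_def by (rule ell2_lincomb[OF Rh h])
  have "R m = (\<lambda>x. 1 * R (R h) x + (- of_real s) * R h x)"
    unfolding m_def using bounded Rh h unfolding bounded_op_def by blast
  also have "\<dots> = (\<lambda>x. - of_real s * m x)"
    unfolding RRh m_def \<open>complex_of_real c = _\<close> by (simp add: algebra_simps)
  finally have "m = (\<lambda>_. 0)" by (rule positive_op_no_negative_eigenvalue[OF pos m _ \<open>s > 0\<close>])
  show ?thesis
  proof
    fix x
    have "m x = 0" using \<open>m = (\<lambda>_. 0)\<close> by simp
    then show "R h x = of_real (sqrt c) * h x" unfolding m_def s_def by (simp add: algebra_simps)
  qed
qed

lemma eq_sqrt_mult_iff: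
  fixes x y :: real
  assumes "x \<ge> 0" "y \<ge> 0"
  shows "x = sqrt x * sqrt y \<longleftrightarrow> x = 0 \<or> x = y"
proof
  assume h: "x = sqrt x * sqrt y"
  have "x * x = (sqrt x * sqrt y) * (sqrt x * sqrt y)" using arg_cong2[OF h h, of "(*)"] .
  also have "\<dots> = (sqrt x * sqrt x) * (sqrt y * sqrt y)" by (simp only: mult_ac)
  also have "\<dots> = x * y" using assms by simp
  finally show "x = 0 \<or> x = y" by auto
qed (use assms in auto)

section \<open>The adjacency operator\<close>

locale adjacency = dtree +
  assumes bounded: "bounded_op V (adjacency_op V E)"
begin

abbreviation S where "S \<equiv> adjacency_op V E"

lemma S_ell2: "f \<in> ell2 V \<Longrightarrow> S f \<in> ell2 V"
  using bounded unfolding bounded_op_def by blast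

lemma S_edge: "(u, v) \<in> E \<Longrightarrow> S f v = f u"
  unfolding adjacency_op_def using edge_in_V par_eqI by auto

lemma S_parentless: "\<forall>u. (u, v) \<notin> E \<Longrightarrow> S f v = 0"
  unfolding adjacency_op_def by auto

lemma S_outside: "v \<notin> V \<Longrightarrow> S f v = 0"
  unfolding adjacency_op_def by auto

lemma S_ket: "S (ket u) = (\<lambda>v. if v \<in> Chi E u then 1 else 0)"
proof
  fix v show "S (ket u) v = (if v \<in> Chi E u then 1 else 0)"
  proof (cases "\<exists>w. (w, v) \<in> E")
    case True
    then obtain w where w: "(w, v) \<in> E" by blast
    then have "v \<in> Chi E u \<longleftrightarrow> w = u" using parent_unique mem_Chi_iff by blast
    then show ?thesis using S_edge[OF w] by (simp add: ket_def)
  qed (use S_parentless mem_Chi_iff in auto)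
qed

text \<open>Boundedness of \<open>S\<close> bounds the degrees, since \<open>\<parallel>S e\<^sub>u\<parallel>\<^sup>2 = deg u\<close>.\<close>

lemma finite_Chi_bounded: "finite (Chi E u)"
proof (cases "u \<in> V")
  case True
  have "(\<lambda>x. (cmod (S (ket u) x))\<^sup>2) summable_on Chi E u"
    using ell2_summable[OF S_ell2[OF ket_ell2[OF True]]] Chi_subset by (rule summable_on_subset)
  moreover have "(\<lambda>x. (cmod (S (ket u) x))\<^sup>2) summable_on Chi E u \<longleftrightarrow> (\<lambda>_. 1::real) summable_on Chi E u"
    by (rule summable_on_cong) (simp add: S_ket)
  ultimately have "(\<lambda>_. 1::real) summable_on Chi E u" by blast
  then show ?thesis using infsum_diverge_constant[of "Chi E u" "1::real"] by auto
qed (simp add: Chi_empty_outside)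

sublocale fin_dtree V E
  by unfold_locales (rule finite_Chi_bounded)

lemma ell2_norm_S_ket: "u \<in> V \<Longrightarrow> ell2_norm V (S (ket u)) = sqrt (real (deg E u))"
proof -
  have "(\<Sum>\<^sub>\<infinity>x\<in>V. (cmod (S (ket u) x))\<^sup>2) = (\<Sum>\<^sub>\<infinity>x\<in>Chi E u. 1)"
    by (rule infsum_cong_neutral) (use Chi_subset in \<open>auto simp: S_ket\<close>)
  then show ?thesis unfolding ell2_norm_def deg_def using finite_Chi by simp
qed

lemma deg_bounded: "\<exists>D. \<forall>u. deg E u \<le> D"
proof -
  obtain C where C: "\<And>f. f \<in> ell2 V \<Longrightarrow> ell2_norm V (S f) \<le> C * ell2_norm V f"
    using bounded unfolding bounded_op_def by blast
  obtain n :: nat where n: "C\<^sup>2 \<le> real n" using real_arch_simple by blast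
  have "deg E u \<le> n" for u
  proof (cases "u \<in> V")
    case True
    have "sqrt (real (deg E u)) \<le> C"
      using C[OF ket_ell2[OF True]] ell2_norm_ket[OF True] ell2_norm_S_ket[OF True] by simp
    then have "(sqrt (real (deg E u)))\<^sup>2 \<le> C\<^sup>2" by (rule power_mono) simp
    then have "real (deg E u) \<le> C\<^sup>2" by simp
    then show ?thesis using n by simp
  qed (simp add: deg_def Chi_empty_outside)
  then show ?thesis by blast
qed

definition deg_bound :: nat where
  "deg_bound = (SOME D. \<forall>u. deg E u \<le> D)"

lemma deg_le_bound: "deg E u \<le> deg_bound"
  using someI_ex[OF deg_bounded] unfolding deg_bound_def by blast

text \<open>Like \<open>adjoint\<close>, \<open>S_adj\<close> sends functions outside \<open>\<ell>\<^sup>2(V)\<close> to \<open>0\<close>.\<close>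

definition S_adj :: "('a \<Rightarrow> complex) \<Rightarrow> 'a \<Rightarrow> complex" where
  "S_adj g = (if g \<in> ell2 V then (\<lambda>u. if u \<in> V then \<Sum>v\<in>Chi E u. g v else 0) else (\<lambda>_. 0))"

lemma S_adj_apply: "g \<in> ell2 V \<Longrightarrow> S_adj g u = (if u \<in> V then \<Sum>v\<in>Chi E u. g v else 0)"
  unfolding S_adj_def by simp

lemma Sigma_Chi: "Sigma V (Chi E) = E"
  using edges_subset mem_Chi_iff by auto

lemma summable_on_edges:
  fixes h :: "'a \<Rightarrow> 'b::banach"
  shows "h summable_on V \<Longrightarrow> (\<lambda>(u, v). h v) summable_on E"
proof -
  assume "h summable_on V"
  moreover have "snd ` E \<subseteq> V" using edges_subset by auto
  ultimately have "h summable_on snd ` E" by (rule summable_on_subset_banach)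
  moreover have "inj_on snd E" using parent_unique by (auto simp: inj_on_def)
  ultimately show ?thesis using summable_on_reindex[of snd E h] by (simp add: comp_def case_prod_unfold)
qed

lemma S_adj_ell2: "S_adj g \<in> ell2 V"
proof (cases "g \<in> ell2 V")
  case g: True
  let ?q = "\<lambda>u. \<Sum>\<^sub>\<infinity>v\<in>Chi E u. (cmod (g v))\<^sup>2"
  have "(\<lambda>(u, v). (cmod (g v))\<^sup>2) summable_on Sigma V (Chi E)"
    using summable_on_edges[OF ell2_summable[OF g]] by (simp only: Sigma_Chi)
  then have "?q summable_on V" using summable_on_Sigma_banach by fastforce
  then have "(\<lambda>u. real deg_bound * ?q u) summable_on V" by (rule summable_on_cmult_right)
  \<comment> \<open>Cauchy-Schwarz over the at most \<open>deg_bound\<close> children\<close>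
  then have "(\<lambda>u. (cmod (S_adj g u))\<^sup>2) summable_on V"
  proof (rule summable_on_comparison_test)
    fix u assume u: "u \<in> V"
    have "cmod (S_adj g u) \<le> (\<Sum>v\<in>Chi E u. cmod (g v))"
      using S_adj_apply[OF g] u norm_sum by simp
    then have "(cmod (S_adj g u))\<^sup>2 \<le> (\<Sum>v\<in>Chi E u. cmod (g v))\<^sup>2" by (simp add: power_mono)
    also have "\<dots> \<le> (\<Sum>v\<in>Chi E u. (cmod (g v))\<^sup>2) * real (card (Chi E u))"
      by (rule sum_squared_le_sum_of_squares)
    also have "\<dots> \<le> (\<Sum>v\<in>Chi E u. (cmod (g v))\<^sup>2) * real deg_bound"
      using deg_le_bound[of u] unfolding deg_def by (intro mult_left_mono) (auto intro: sum_nonneg)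
    finally show "(cmod (S_adj g u))\<^sup>2 \<le> real deg_bound * ?q u" using finite_Chi by (simp add: mult.commute)
  qed simp
  then show ?thesis unfolding ell2_def using S_adj_apply[OF g] by simp
qed (simp add: S_adj_def ell2_zero)

lemma ell2_inner_S_S_adj:
  assumes f: "f \<in> ell2 V" and g: "g \<in> ell2 V"
  shows "ell2_inner V (S f) g = ell2_inner V f (S_adj g)"
proof -
  let ?h = "\<lambda>v. cnj (S f v) * g v"
  have inj: "inj_on snd E" using parent_unique by (auto simp: inj_on_def)
  \<comment> \<open>re-index the sum over vertices as a sum over edges, then split it by the tail\<close>
  have "ell2_inner V (S f) g = infsum ?h (snd ` E)"
    unfolding ell2_inner_def
  proof (rule infsum_cong_neutral)
    fix v assume "v \<in> V - snd ` E"
    then have "\<forall>u. (u, v) \<notin> E" by force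
    then show "?h v = 0" by (simp add: S_parentless)
  qed (use edges_subset in auto)
  also have "\<dots> = infsum (?h \<circ> snd) E" by (rule infsum_reindex[OF inj])
  also have "\<dots> = infsum (\<lambda>(u, v). cnj (f u) * g v) E" by (rule infsum_cong) (auto simp: S_edge)
  also have "\<dots> = infsum (\<lambda>u. infsum (\<lambda>v. cnj (f u) * g v) (Chi E u)) V"
  proof (subst Sigma_Chi[symmetric], rule infsum_Sigma'_banach[symmetric])
    have "snd ` E \<subseteq> V" using edges_subset by auto
    with ell2_inner_summable[OF S_ell2[OF f] g] have "?h summable_on snd ` E"
      by (rule summable_on_subset)
    then have "(?h \<circ> snd) summable_on E" using summable_on_reindex[OF inj] by blast
    moreover have "(\<lambda>(u, v). cnj (f u) * g v) summable_on E \<longleftrightarrow> (?h \<circ> snd) summable_on E"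
      by (rule summable_on_cong) (auto simp: S_edge)
    ultimately have "(\<lambda>(u, v). cnj (f u) * g v) summable_on E" by blast
    then show "(\<lambda>(u, v). cnj (f u) * g v) summable_on Sigma V (Chi E)" by (simp add: Sigma_Chi)
  qed
  also have "\<dots> = ell2_inner V f (S_adj g)"
    unfolding ell2_inner_def using finite_Chi
    by (intro infsum_cong) (simp add: S_adj_apply[OF g] sum_distrib_left)
  finally show ?thesis .
qed

lemma adjoint_S: "adjoint V S = S_adj"
proof (rule adjoint_eqI)
  show "S_adj g \<in> ell2 V" for g by (rule S_adj_ell2)
  show "g \<notin> ell2 V \<Longrightarrow> S_adj g = (\<lambda>_. 0)" for g by (simp add: S_adj_def)
qed (rule ell2_inner_S_S_adj)

lemma adjoint_S_adj: "adjoint V S_adj = (\<lambda>g. if g \<in> ell2 V then S g else (\<lambda>_. 0))"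
proof (rule adjoint_eqI)
  fix f g assume f: "f \<in> ell2 V" and g: "g \<in> ell2 V"
  have "ell2_inner V (S_adj f) g = cnj (ell2_inner V g (S_adj f))" by (rule ell2_inner_cnj)
  also have "\<dots> = cnj (ell2_inner V (S g) f)" using ell2_inner_S_S_adj[OF g f] by simp
  finally show "ell2_inner V (S_adj f) g = ell2_inner V f (if g \<in> ell2 V then S g else (\<lambda>_. 0))"
    using ell2_inner_cnj[of V f "S g"] g by simp
qed (auto simp: S_ell2 ell2_zero)

lemma S_adj_S:
  "f \<in> ell2 V \<Longrightarrow> S_adj (S f) = (\<lambda>u. if u \<in> V then of_nat (deg E u) * f u else 0)"
  by (rule ext) (simp add: S_adj_apply S_ell2 S_edge mem_Chi_iff deg_def)

lemma S_adj_S_adj_S: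
  "f \<in> ell2 V \<Longrightarrow>
    S_adj (S_adj (S f)) = (\<lambda>u. if u \<in> V then \<Sum>v\<in>Chi E u. of_nat (deg E v) * f v else 0)"
proof
  fix u assume f: "f \<in> ell2 V"
  have "S_adj (S_adj (S f)) u = (if u \<in> V then \<Sum>v\<in>Chi E u. S_adj (S f) v else 0)"
    by (rule S_adj_apply[OF S_adj_ell2])
  also have "\<dots> = (if u \<in> V then \<Sum>v\<in>Chi E u. of_nat (deg E v) * f v else 0)"
    by (auto simp: S_adj_S[OF f] intro!: sum.cong dest: Chi_subset[THEN subsetD])
  finally show "S_adj (S_adj (S f)) u = \<dots>" .
qed

lemma S_adj_S_adj_S_S:
  "f \<in> ell2 V \<Longrightarrow>
    S_adj (S_adj (S (S f))) = (\<lambda>u. if u \<in> V then of_nat (child_deg_sum u) * f u else 0)"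
  by (rule ext)
    (simp add: S_adj_S_adj_S S_ell2 S_edge mem_Chi_iff child_deg_sum_def sum_distrib_right)

text \<open>At the basis vector of \<open>u\<close>, the defining identity of a \<open>2\<close>-isometry reads
  \<open>1 - 2 deg u + child_deg_sum u = 0\<close>.\<close>

lemma two_isometry_iff_balanced: "two_isometry V S \<longleftrightarrow> deg_balanced"
proof
  assume iso: "two_isometry V S"
  show deg_balanced unfolding deg_balanced_def
  proof
    fix u assume u: "u \<in> V"
    have "(\<lambda>x. ket u x - 2 * S_adj (S (ket u)) x + S_adj (S_adj (S (S (ket u)))) x) = (\<lambda>_. 0)"
      using iso ket_ell2[OF u] unfolding two_isometry_def adjoint_S by blast
    then have "ket u u - 2 * S_adj (S (ket u)) u + S_adj (S_adj (S (S (ket u)))) u = 0" by metis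
    then have "of_nat (1 + child_deg_sum u) = (of_nat (2 * deg E u) :: complex)"
      using u by (simp only: S_adj_S[OF ket_ell2[OF u]] S_adj_S_adj_S_S[OF ket_ell2[OF u]])
        (simp add: ket_def algebra_simps)
    then show "1 + child_deg_sum u = 2 * deg E u" using of_nat_eq_iff by blast
  qed
next
  assume bal: deg_balanced
  show "two_isometry V S" unfolding two_isometry_def adjoint_S
  proof (intro ballI ext)
    fix f x assume f: "f \<in> ell2 V"
    show "f x - 2 * S_adj (S f) x + S_adj (S_adj (S (S f))) x = 0"
    proof (cases "x \<in> V")
      case True
      then have "1 + of_nat (child_deg_sum x) = 2 * (of_nat (deg E x) :: complex)"
        using bal unfolding deg_balanced_def by (metis of_nat_1 of_nat_add of_nat_mult of_nat_numeral)
      then have "f x * (1 + of_nat (child_deg_sum x)) = f x * (2 * of_nat (deg E x))" by simp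
      then show ?thesis using True by (simp add: S_adj_S[OF f] S_adj_S_adj_S_S[OF f] algebra_simps)
    qed (simp add: S_adj_S[OF f] S_adj_S_adj_S_S[OF f] ell2_vanishes[OF f])
  qed
qed

text \<open>For siblings \<open>v, w\<close> the vector \<open>ket v - ket w\<close> lies in \<open>ker S\<^sup>*\<close>; the kernel condition
  applied to it compares their degrees.\<close>

lemma kernel_condition_imp_siblings_same_deg:
  assumes ker: "kernel_condition V S" and v: "v \<in> Chi E u" and w: "w \<in> Chi E u"
  shows "deg E v = deg E w"
proof -
  define f where "f = (\<lambda>x. 1 * ket v x + (- 1) * ket w x)"
  have "v \<in> V" "w \<in> V" "u \<in> V" using v w Chi_subset edge_in_V mem_Chi_iff by auto
  then have f: "f \<in> ell2 V" unfolding f_def by (intro ell2_lincomb ket_ell2)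
  have parents: "v \<in> Chi E x \<longleftrightarrow> x = u" "w \<in> Chi E x \<longleftrightarrow> x = u" for x
    using v w parent_unique mem_Chi_iff by blast+
  have "S_adj f = (\<lambda>_. 0)"
  proof
    fix x
    have "(\<Sum>y\<in>Chi E x. f y) = (\<Sum>y\<in>Chi E x. 1 * ket v y) - (\<Sum>y\<in>Chi E x. 1 * ket w y)"
      unfolding f_def by (simp add: sum_subtractf)
    then show "S_adj f x = 0" using parents finite_Chi by (simp add: S_adj_apply[OF f] ket_def)
  qed
  then have "S_adj (S_adj (S f)) u = 0" using ker f unfolding kernel_condition_def adjoint_S by simp
  moreover have "S_adj (S_adj (S f)) u =
      (\<Sum>y\<in>Chi E u. of_nat (deg E y) * ket v y) - (\<Sum>y\<in>Chi E u. of_nat (deg E y) * ket w y)"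
    using \<open>u \<in> V\<close> by (simp only: S_adj_S_adj_S[OF f]) (simp add: f_def sum_subtractf algebra_simps)
  ultimately have "(of_nat (deg E v) :: complex) = of_nat (deg E w)"
    using v w by (simp add: sum_ket[OF finite_Chi])
  then show ?thesis by simp
qed

lemma two_isometry_kernel_condition_iff: "two_isometry V S \<and> kernel_condition V S \<longleftrightarrow> all_deg_one"
proof
  assume all_deg_one
  then have deg1: "x \<in> V \<Longrightarrow> deg E x = 1" for x unfolding all_deg_one_def by blast
  have "kernel_condition V S" unfolding kernel_condition_def adjoint_S
  proof (intro ballI impI ext)
    fix f x assume f: "f \<in> ell2 V" and "S_adj f = (\<lambda>_. 0)"
    then have "S_adj f x = 0" by simp
    then show "S_adj (S_adj (S f)) x = 0"
      using deg1 Chi_subset by (auto simp: S_adj_S_adj_S[OF f] S_adj_apply[OF f] subset_iff)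
  qed
  then show "two_isometry V S \<and> kernel_condition V S"
    using all_deg_one_imp_conditions[OF \<open>all_deg_one\<close>] two_isometry_iff_balanced by blast
next
  assume "two_isometry V S \<and> kernel_condition V S"
  then have bal: deg_balanced and ker: "kernel_condition V S"
    using two_isometry_iff_balanced by blast+
  show all_deg_one unfolding all_deg_one_def
  proof (rule ballI, rule ccontr)
    fix u assume u: "u \<in> V" "deg E u \<noteq> 1"
    have bal_u: "1 + child_deg_sum u = 2 * deg E u" using bal u unfolding deg_balanced_def by blast
    then have "deg E u \<ge> 2" using u by linarith
    then obtain v where v: "v \<in> Chi E u" unfolding deg_def by fastforce
    \<comment> \<open>all children have the degree \<open>d\<close> of \<open>v\<close>, so \<open>1 + deg u * d = 2 * deg u\<close>, impossible\<close>
    have "child_deg_sum u = (\<Sum>w\<in>Chi E u. deg E v)"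
      unfolding child_deg_sum_def using kernel_condition_imp_siblings_same_deg[OF ker _ v] by simp
    then have eq: "1 + deg E u * deg E v = 2 * deg E u" using bal_u unfolding deg_def by simp
    consider "deg E v = 0" | "deg E v = 1" | "deg E v \<ge> 2" by linarith
    then show False
    proof cases
      case 3
      then have "deg E u * 2 \<le> deg E u * deg E v" by simp
      then show False using eq by linarith
    qed (use eq \<open>deg E u \<ge> 2\<close> in simp_all)
  qed
qed

definition Delta_diag :: "('a \<Rightarrow> complex) \<Rightarrow> 'a \<Rightarrow> complex" where
  "Delta_diag f = (\<lambda>x. if x \<in> V then (of_nat (deg E x) - 1) * f x else 0)"

lemma Delta_S: "f \<in> ell2 V \<Longrightarrow> Delta V S f = Delta_diag f"
  unfolding Delta_def adjoint_S Delta_diag_def by (auto simp: S_adj_S algebra_simps ell2_vanishes)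

lemma Delta_diag_ell2:
  assumes "f \<in> ell2 V"
  shows "Delta_diag f \<in> ell2 V"
proof -
  have "(\<lambda>x. 1 * S_adj (S f) x + (- 1) * f x) \<in> ell2 V" by (rule ell2_lincomb[OF S_adj_ell2 assms])
  then show ?thesis using Delta_S[OF assms] unfolding Delta_def adjoint_S by simp
qed

lemma Delta_S_adj: "Delta V S_adj g = (\<lambda>x. S (S_adj g) x - g x)"
  unfolding Delta_def adjoint_S_adj using S_adj_ell2 by simp

lemma Delta_triple_product:
  assumes "f \<in> ell2 V"
  shows "Delta V S (Delta V (adjoint V S) (Delta V S f))
    = Delta_diag (\<lambda>x. S (S_adj (Delta_diag f)) x - Delta_diag f x)"
proof -
  have "(\<lambda>x. S (S_adj (Delta_diag f)) x - Delta_diag f x) \<in> ell2 V"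
    using ell2_lincomb[OF S_ell2[OF S_adj_ell2] Delta_diag_ell2[OF assms], where a = 1 and b = "- 1"] by simp
  then show ?thesis unfolding adjoint_S Delta_S_adj Delta_S[OF assms] by (rule Delta_S)
qed

lemma brownian_imp_roots_deg_one:
  assumes "brownian_isometry V S"
  shows roots_deg_one
  unfolding roots_deg_one_def
proof (intro ballI impI)
  fix v assume v: "v \<in> V" and root: "\<forall>u. (u, v) \<notin> E"
  have "Delta_diag (\<lambda>x. S (S_adj (Delta_diag (ket v))) x - Delta_diag (ket v) x) v = 0"
    using assms ket_ell2[OF v] Delta_triple_product unfolding brownian_isometry_def by metis
  then have "(of_nat (deg E v) - 1) * (0 - (of_nat (deg E v) - 1)) = (0::complex)"
    using v S_parentless[OF root] by (simp add: Delta_diag_def ket_def)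
  then show "deg E v = 1" by simp
qed

lemma brownian_imp_siblings_deg_one:
  assumes "brownian_isometry V S"
  shows siblings_deg_one
  unfolding siblings_deg_one_def
proof (intro allI impI)
  fix p v w assume pv: "(p, v) \<in> E" and pw: "(p, w) \<in> E" and "v \<noteq> w" and "deg E v \<noteq> 1"
  have "v \<in> V" "w \<in> V" "p \<in> V" using pv pw edge_in_V by auto
  have "Delta_diag (\<lambda>x. S (S_adj (Delta_diag (ket v))) x - Delta_diag (ket v) x) w = 0"
    using assms ket_ell2[OF \<open>v \<in> V\<close>] Delta_triple_product unfolding brownian_isometry_def by metis
  moreover have "S (S_adj (Delta_diag (ket v))) w = of_nat (deg E v) - 1"
  proof -
    have "S (S_adj (Delta_diag (ket v))) w = (\<Sum>y\<in>Chi E p. Delta_diag (ket v) y)"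
      using S_edge[OF pw] S_adj_apply[OF Delta_diag_ell2[OF ket_ell2[OF \<open>v \<in> V\<close>]]] \<open>p \<in> V\<close> by simp
    also have "\<dots> = (\<Sum>y\<in>Chi E p. if y = v then of_nat (deg E v) - 1 else 0)"
      using \<open>v \<in> V\<close> by (intro sum.cong) (auto simp: Delta_diag_def ket_def)
    also have "\<dots> = of_nat (deg E v) - 1" using pv mem_Chi_iff finite_Chi by simp
    finally show ?thesis .
  qed
  ultimately have "(of_nat (deg E w) - 1) * (of_nat (deg E v) - 1) = (0::complex)"
    using \<open>w \<in> V\<close> \<open>v \<noteq> w\<close> by (simp add: Delta_diag_def ket_def)
  then show "deg E w = 1" using \<open>deg E v \<noteq> 1\<close> by simp
qed

lemma conditions_imp_brownian:
  assumes deg_balanced siblings_deg_one roots_deg_one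
  shows "brownian_isometry V S"
  unfolding brownian_isometry_def
proof (intro conjI ballI)
  show "two_isometry V S" using assms(1) two_isometry_iff_balanced by blast
  fix f assume f: "f \<in> ell2 V"
  let ?g = "Delta_diag f"
  \<comment> \<open>at a vertex \<open>x\<close> of degree \<open>\<noteq> 1\<close>, \<open>S S\<^sup>* ?g\<close> sums \<open>?g\<close> over the siblings of \<open>x\<close>,
    where it vanishes except at \<open>x\<close> itself\<close>
  have "Delta_diag (\<lambda>x. S (S_adj ?g) x - ?g x) x = 0" for x
  proof (cases "x \<in> V \<and> deg E x \<noteq> 1")
    case True
    then obtain p where px: "(p, x) \<in> E" using assms(3) unfolding roots_deg_one_def by blast
    have "p \<in> V" using px edge_in_V by auto
    have "y \<in> Chi E p - {x} \<Longrightarrow> ?g y = 0" for y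
      using assms(2) True px mem_Chi_iff unfolding siblings_deg_one_def Delta_diag_def by auto
    then have "(\<Sum>y\<in>Chi E p - {x}. ?g y) = 0" by simp
    moreover have "S (S_adj ?g) x = ?g x + (\<Sum>y\<in>Chi E p - {x}. ?g y)"
      using S_edge[OF px] S_adj_apply[OF Delta_diag_ell2[OF f]] \<open>p \<in> V\<close>
        sum.remove[OF finite_Chi, of x p] px mem_Chi_iff by simp
    ultimately show ?thesis unfolding Delta_diag_def by simp
  qed (auto simp: Delta_diag_def)
  then show "Delta V S (Delta V (adjoint V S) (Delta V S f)) = (\<lambda>_. 0)"
    unfolding Delta_triple_product[OF f] by blast
qed

lemma brownian_iff: "brownian_isometry V S \<longleftrightarrow> deg_balanced \<and> siblings_deg_one \<and> roots_deg_one"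
  using brownian_imp_roots_deg_one brownian_imp_siblings_deg_one conditions_imp_brownian
    two_isometry_iff_balanced unfolding brownian_isometry_def by blast

text \<open>\<open>sqrt\<close> is odd, so \<open>sqrt_deg u\<close> is meaningful only for \<open>deg u \<ge> 1\<close>, which holds at
  every vertex once \<open>deg_balanced\<close> does.\<close>

definition sqrt_deg :: "'a \<Rightarrow> real" where
  "sqrt_deg u = sqrt (real (deg E u) - 1)"

definition sqrt_Delta :: "('a \<Rightarrow> complex) \<Rightarrow> 'a \<Rightarrow> complex" where
  "sqrt_Delta f = (if f \<in> ell2 V then (\<lambda>u. of_real (sqrt_deg u) * f u) else (\<lambda>_. 0))"

lemma sqrt_deg_nonneg: "deg_balanced \<Longrightarrow> u \<in> V \<Longrightarrow> sqrt_deg u \<ge> 0"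
  unfolding sqrt_deg_def using balanced_deg_pos by simp

lemma sqrt_deg_mult_self: "deg_balanced \<Longrightarrow> u \<in> V \<Longrightarrow> sqrt_deg u * sqrt_deg u = real (deg E u) - 1"
  unfolding sqrt_deg_def using balanced_deg_pos by simp

lemma abs_sqrt_deg_le: "\<bar>sqrt_deg u\<bar> \<le> sqrt (real deg_bound + 1)"
  unfolding sqrt_deg_def real_sqrt_abs'[symmetric]
  using deg_le_bound[of u] by (intro real_sqrt_le_mono) linarith

lemma sqrt_Delta_apply: "f \<in> ell2 V \<Longrightarrow> sqrt_Delta f = (\<lambda>u. of_real (sqrt_deg u) * f u)"
  unfolding sqrt_Delta_def by simp

lemma sqrt_Delta_ell2: "f \<in> ell2 V \<Longrightarrow> sqrt_Delta f \<in> ell2 V"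
  unfolding sqrt_Delta_apply
  by (rule ell2_bounded_mult[where K = "sqrt (real deg_bound + 1)"]) (use abs_sqrt_deg_le in auto)

lemma sqrt_Delta_lincomb:
  "f \<in> ell2 V \<Longrightarrow> g \<in> ell2 V \<Longrightarrow>
    sqrt_Delta (\<lambda>x. a * f x + b * g x) = (\<lambda>x. a * sqrt_Delta f x + b * sqrt_Delta g x)"
  using ell2_lincomb[of f V g a b] by (simp add: sqrt_Delta_apply algebra_simps)

lemma bounded_op_sqrt_Delta: "bounded_op V sqrt_Delta"
  unfolding bounded_op_def
proof (intro conjI ballI allI)
  let ?K = "real deg_bound + 1"
  show "\<exists>C. \<forall>f\<in>ell2 V. ell2_norm V (sqrt_Delta f) \<le> C * ell2_norm V f"
  proof (intro exI ballI)
  fix f assume f: "f \<in> ell2 V"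
  have "(\<Sum>\<^sub>\<infinity>x\<in>V. (cmod (sqrt_Delta f x))\<^sup>2) \<le> (\<Sum>\<^sub>\<infinity>x\<in>V. ?K * (cmod (f x))\<^sup>2)"
  proof (rule infsum_mono)
    show "(\<lambda>x. (cmod (sqrt_Delta f x))\<^sup>2) summable_on V" using ell2_summable[OF sqrt_Delta_ell2[OF f]] .
    show "(\<lambda>x. ?K * (cmod (f x))\<^sup>2) summable_on V" using summable_on_cmult_right[OF ell2_summable[OF f]] .
    fix x
    have "(cmod (sqrt_Delta f x))\<^sup>2 = \<bar>sqrt_deg x\<bar>\<^sup>2 * (cmod (f x))\<^sup>2"
      by (simp add: sqrt_Delta_apply[OF f] norm_mult power_mult_distrib)
    also have "\<dots> \<le> (sqrt ?K)\<^sup>2 * (cmod (f x))\<^sup>2"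
      by (intro mult_right_mono power_mono abs_sqrt_deg_le) auto
    finally show "(cmod (sqrt_Delta f x))\<^sup>2 \<le> ?K * (cmod (f x))\<^sup>2" by simp
  qed
  also have "\<dots> = ?K * (\<Sum>\<^sub>\<infinity>x\<in>V. (cmod (f x))\<^sup>2)"
    by (rule infsum_cmult_right) (use ell2_summable[OF f] in auto)
  finally have "sqrt (\<Sum>\<^sub>\<infinity>x\<in>V. (cmod (sqrt_Delta f x))\<^sup>2) \<le> sqrt (?K * (\<Sum>\<^sub>\<infinity>x\<in>V. (cmod (f x))\<^sup>2))"
    by (rule real_sqrt_le_mono)
  then show "ell2_norm V (sqrt_Delta f) \<le> sqrt ?K * ell2_norm V f"
    unfolding ell2_norm_def by (simp add: real_sqrt_mult)
  qed
qed (use sqrt_Delta_ell2 sqrt_Delta_lincomb in auto)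

lemma positive_op_sqrt_Delta:
  assumes bal: deg_balanced
  shows "positive_op V sqrt_Delta"
  unfolding positive_op_def
proof (intro ballI conjI)
  fix f assume f: "f \<in> ell2 V"
  let ?g = "\<lambda>x. sqrt_deg x * (cmod (f x))\<^sup>2"
  have "?g summable_on V"
  proof (rule summable_on_comparison_test)
    show "(\<lambda>x. sqrt (real deg_bound + 1) * (cmod (f x))\<^sup>2) summable_on V"
      using summable_on_cmult_right[OF ell2_summable[OF f]] .
    fix x assume "x \<in> V"
    then show "0 \<le> ?g x" "?g x \<le> sqrt (real deg_bound + 1) * (cmod (f x))\<^sup>2"
      using abs_sqrt_deg_le[of x] sqrt_deg_nonneg[OF bal] by (auto intro: mult_right_mono)
  qed
  have "cnj (of_real (sqrt_deg x) * f x) * f x = of_real (?g x)" for x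
  proof -
    have "cnj (f x) * f x = of_real ((cmod (f x))\<^sup>2)"
      by (metis complex_norm_square mult.commute of_real_power)
    then show ?thesis by simp
  qed
  then have "ell2_inner V (sqrt_Delta f) f = (\<Sum>\<^sub>\<infinity>x\<in>V. complex_of_real (?g x))"
    unfolding ell2_inner_def sqrt_Delta_apply[OF f] by (rule infsum_cong)
  with infsum_complex_of_real[OF \<open>?g summable_on V\<close>]
  have inner: "ell2_inner V (sqrt_Delta f) f = of_real (infsum ?g V)" by simp
  show "Im (ell2_inner V (sqrt_Delta f) f) = 0" unfolding inner by simp
  have "infsum ?g V \<ge> 0" by (rule infsum_nonneg) (use sqrt_deg_nonneg[OF bal] in simp)
  then show "Re (ell2_inner V (sqrt_Delta f) f) \<ge> 0" unfolding inner by simp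
qed

lemma sqrt_Delta_sqrt_Delta:
  assumes bal: deg_balanced and f: "f \<in> ell2 V"
  shows "sqrt_Delta (sqrt_Delta f) = Delta V S f"
proof
  fix x
  have RR: "sqrt_Delta (sqrt_Delta f) x = of_real (sqrt_deg x) * (of_real (sqrt_deg x) * f x)"
    by (simp only: sqrt_Delta_apply[OF sqrt_Delta_ell2[OF f]]) (simp add: sqrt_Delta_apply[OF f])
  show "sqrt_Delta (sqrt_Delta f) x = Delta V S f x"
  proof (cases "x \<in> V")
    case True
    have "complex_of_real (sqrt_deg x) * (complex_of_real (sqrt_deg x) * f x)
        = complex_of_real (sqrt_deg x * sqrt_deg x) * f x" by simp
    also have "\<dots> = (of_nat (deg E x) - 1) * f x" using sqrt_deg_mult_self[OF bal True] by simp
    finally show ?thesis using True RR by (simp add: Delta_S[OF f] Delta_diag_def)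
  qed (use RR in \<open>simp add: Delta_S[OF f] Delta_diag_def ell2_vanishes[OF f]\<close>)
qed

text \<open>Uniqueness of the positive square root: \<open>\<Delta>\<^sub>S\<close> is diagonal with finitely many
  eigenvalues \<open>k - 1\<close> (\<open>k \<le> deg_bound\<close>), and on each eigenspace every positive square root
  acts as \<open>\<surd>(k - 1)\<close>.\<close>

definition deg_restrict :: "nat set \<Rightarrow> ('a \<Rightarrow> complex) \<Rightarrow> 'a \<Rightarrow> complex" where
  "deg_restrict K f = (\<lambda>u. if deg E u \<in> K then f u else 0)"

lemma positive_sqrt_eq_sqrt_Delta_on_deg_restrict:
  assumes bal: deg_balanced
    and R: "bounded_op V R" "positive_op V R" "\<forall>g\<in>ell2 V. R (R g) = Delta V S g"
    and f: "f \<in> ell2 V" and "finite K" "K \<subseteq> {1..}"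
  shows "R (deg_restrict K f) = sqrt_Delta (deg_restrict K f)"
  using \<open>finite K\<close> \<open>K \<subseteq> {1..}\<close>
proof (induction K rule: finite_induct)
  have lin: "\<And>p q a b. p \<in> ell2 V \<Longrightarrow> q \<in> ell2 V \<Longrightarrow>
      R (\<lambda>x. a * p x + b * q x) = (\<lambda>x. a * R p x + b * R q x)"
    using R(1) unfolding bounded_op_def by blast
  have restr: "deg_restrict K f \<in> ell2 V" for K unfolding deg_restrict_def by (rule ell2_restrict[OF f])
  {
    case empty
    have "R (\<lambda>x. 0 * 0 + 0 * 0) = (\<lambda>x. 0 * R (\<lambda>_. 0) x + 0 * R (\<lambda>_. 0) x)"
      by (rule lin[OF ell2_zero ell2_zero])
    then show ?case by (simp add: deg_restrict_def sqrt_Delta_apply[OF ell2_zero])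
  next
    case (insert k K)
    have "Delta V S (deg_restrict {k} f) = (\<lambda>x. of_real (real k - 1) * deg_restrict {k} f x)"
      unfolding Delta_S[OF restr] using ell2_vanishes[OF f] by (auto simp: Delta_diag_def deg_restrict_def)
    then have "R (deg_restrict {k} f) = (\<lambda>x. of_real (sqrt (real k - 1)) * deg_restrict {k} f x)"
      using positive_op_sqrt_eigenvector[OF R(1,2) restr] R(3) restr insert.prems by auto
    also have "\<dots> = sqrt_Delta (deg_restrict {k} f)"
      unfolding sqrt_Delta_apply[OF restr] by (auto simp: deg_restrict_def sqrt_deg_def)
    finally have Rk: "R (deg_restrict {k} f) = sqrt_Delta (deg_restrict {k} f)" .
    have split: "deg_restrict (insert k K) f = (\<lambda>x. 1 * deg_restrict {k} f x + 1 * deg_restrict K f x)"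
      unfolding deg_restrict_def using insert.hyps(2) by auto
    show ?case unfolding split lin[OF restr restr] sqrt_Delta_lincomb[OF restr restr]
      using Rk insert.IH insert.prems by simp
  }
qed

lemma sqrt_op_Delta_S:
  assumes bal: deg_balanced
  shows "sqrt_op V (Delta V S) = sqrt_Delta"
  unfolding sqrt_op_def
proof (rule the_equality)
  show "bounded_op V sqrt_Delta \<and> positive_op V sqrt_Delta
      \<and> (\<forall>f\<in>ell2 V. sqrt_Delta (sqrt_Delta f) = Delta V S f)
      \<and> (\<forall>f. f \<notin> ell2 V \<longrightarrow> sqrt_Delta f = (\<lambda>_. 0))"
    using bounded_op_sqrt_Delta positive_op_sqrt_Delta[OF bal] sqrt_Delta_sqrt_Delta[OF bal]
    by (simp add: sqrt_Delta_def)
  fix R assume R: "bounded_op V R \<and> positive_op V R \<and> (\<forall>f\<in>ell2 V. R (R f) = Delta V S f)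
      \<and> (\<forall>f. f \<notin> ell2 V \<longrightarrow> R f = (\<lambda>_. 0))"
  have "R f = sqrt_Delta f" for f
  proof (cases "f \<in> ell2 V")
    case True
    have "deg_restrict {1..deg_bound} f = f"
      unfolding deg_restrict_def
      using balanced_deg_pos[OF bal] deg_le_bound ell2_vanishes[OF True] by fastforce
    then show ?thesis
      using positive_sqrt_eq_sqrt_Delta_on_deg_restrict[OF bal _ _ _ True, of R "{1..deg_bound}"] R
      by auto
  qed (use R in \<open>simp add: sqrt_Delta_def\<close>)
  then show "R = sqrt_Delta" by blast
qed

lemma quasi_brownian_iff_identity:
  assumes deg_balanced
  shows "quasi_brownian_isometry V S \<longleftrightarrow>
    (\<forall>f\<in>ell2 V. Delta_diag (S f) = sqrt_Delta (S (sqrt_Delta f)))"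
  unfolding quasi_brownian_isometry_def sqrt_op_Delta_S[OF assms]
  using two_isometry_iff_balanced assms Delta_S S_ell2 by auto

lemma sqrt_Delta_S_sqrt_Delta_edge:
  assumes "f \<in> ell2 V" "(p, x) \<in> E"
  shows "sqrt_Delta (S (sqrt_Delta f)) x = of_real (sqrt_deg x * sqrt_deg p) * f p"
proof -
  have "sqrt_Delta (S (sqrt_Delta f)) x = of_real (sqrt_deg x) * S (sqrt_Delta f) x"
    by (simp only: sqrt_Delta_apply[OF S_ell2[OF sqrt_Delta_ell2[OF assms(1)]]])
  also have "\<dots> = of_real (sqrt_deg x) * (of_real (sqrt_deg p) * f p)"
    by (simp add: S_edge[OF assms(2)] sqrt_Delta_apply[OF assms(1)])
  finally show ?thesis by simp
qed

lemma identity_imp_inherited: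
  assumes bal: deg_balanced
    and id: "\<forall>f\<in>ell2 V. Delta_diag (S f) = sqrt_Delta (S (sqrt_Delta f))"
  shows deg_inherited
  unfolding deg_inherited_def
proof (intro allI impI)
  fix u v assume uv: "(u, v) \<in> E"
  then have "u \<in> V" "v \<in> V" using edge_in_V by auto
  have "Delta_diag (S (ket u)) v = sqrt_Delta (S (sqrt_Delta (ket u))) v"
    using id ket_ell2[OF \<open>u \<in> V\<close>] by metis
  then have "complex_of_real (real (deg E v) - 1) = complex_of_real (sqrt_deg v * sqrt_deg u)"
    using \<open>v \<in> V\<close> sqrt_Delta_S_sqrt_Delta_edge[OF ket_ell2[OF \<open>u \<in> V\<close>] uv]
    by (simp add: Delta_diag_def S_edge[OF uv] ket_def)
  then have "real (deg E v) - 1 = sqrt (real (deg E v) - 1) * sqrt (real (deg E u) - 1)"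
    unfolding sqrt_deg_def of_real_eq_iff .
  then show "deg E v = 1 \<or> deg E v = deg E u"
    using eq_sqrt_mult_iff balanced_deg_pos[OF bal] \<open>u \<in> V\<close> \<open>v \<in> V\<close> by fastforce
qed

lemma inherited_imp_identity:
  assumes bal: deg_balanced and inh: deg_inherited and f: "f \<in> ell2 V"
  shows "Delta_diag (S f) = sqrt_Delta (S (sqrt_Delta f))"
proof
  fix x show "Delta_diag (S f) x = sqrt_Delta (S (sqrt_Delta f)) x"
  proof (cases "x \<in> V \<and> (\<exists>p. (p, x) \<in> E)")
    case True
    then obtain p where px: "(p, x) \<in> E" and "x \<in> V" by blast
    have "deg E x = 1 \<or> deg E x = deg E p" using inh px unfolding deg_inherited_def by blast
    then have "real (deg E x) - 1 = sqrt_deg x * sqrt_deg p"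
      using sqrt_deg_mult_self[OF bal \<open>x \<in> V\<close>] unfolding sqrt_deg_def by auto
    then have "of_nat (deg E x) - 1 = complex_of_real (sqrt_deg x * sqrt_deg p)"
      by (metis of_real_1 of_real_diff of_real_of_nat_eq)
    then show ?thesis
      using \<open>x \<in> V\<close> sqrt_Delta_S_sqrt_Delta_edge[OF f px] by (simp add: Delta_diag_def S_edge[OF px])
  next
    case False
    then have "S f x = 0" "S (sqrt_Delta f) x = 0" using S_outside S_parentless by blast+
    then show ?thesis
      by (simp only: sqrt_Delta_apply[OF S_ell2[OF sqrt_Delta_ell2[OF f]]]) (simp add: Delta_diag_def)
  qed
qed

lemma quasi_brownian_iff: "quasi_brownian_isometry V S \<longleftrightarrow> deg_balanced \<and> deg_inherited"
  using quasi_brownian_iff_identity identity_imp_inherited inherited_imp_identity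
    two_isometry_iff_balanced unfolding quasi_brownian_isometry_def by blast

end

theorem mainTheorem18:
  fixes V :: "'a set" and E :: "('a \<times> 'a) set"
  assumes tree: "directed_tree V E"
    and bdd: "bounded_op V (adjacency_op V E)"
  shows "(two_isometry V (adjacency_op V E) \<and> kernel_condition V (adjacency_op V E)
            \<longleftrightarrow> iso_Zplus V E \<or> iso_Z V E)
    \<and> (rooted V E \<longrightarrow> (brownian_isometry V (adjacency_op V E) \<longleftrightarrow> iso_Zplus V E))
    \<and> (rooted V E \<longrightarrow> (quasi_brownian_isometry V (adjacency_op V E)
            \<longleftrightarrow> iso_Zplus V E \<or> quasi_brownian_tree V E))
    \<and> (\<not> rooted V E \<longrightarrow>
          (quasi_brownian_isometry V (adjacency_op V E) \<longleftrightarrow> brownian_isometry V (adjacency_op V E))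
        \<and> (brownian_isometry V (adjacency_op V E) \<longleftrightarrow> iso_Z V E \<or> quasi_brownian_tree V E))"
proof -
  interpret adjacency V E
    using tree bdd by (simp add: adjacency_def adjacency_axioms_def dtree_def)
  have brownian: "brownian_isometry V S \<longleftrightarrow> deg_balanced \<and> deg_inherited \<and> roots_deg_one"
    using brownian_iff balanced_siblings_imp_inherited balanced_inherited_imp_siblings by blast
  have "\<not> rooted V E \<Longrightarrow> roots_deg_one"
    unfolding roots_deg_one_def rooted_def is_root_def by blast
  then show ?thesis
    using two_isometry_kernel_condition_iff quasi_brownian_iff brownian balanced_inherited_iff
      rooted_conditions_iff_all_deg_one iso_Zplus_iff iso_Z_iff by blast
qed

end
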